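(* Assume Conditions (A), (P) and (Ah) from the context, and assume additionally that $A_{h,1}$ and $A_{h,2}$ commute and are self-adjoint (with respect to $(\cdot,\cdot)_H$ on $V_h$). Let $t_f>0$, $N\in\mathbb N$, $\tau=t_f/N$, $t_n=n\tau$ and $S_{h,\tau}=(I+\tau A_{h,2})^{-1}(I+\tau A_{h,1})^{-1}(I+\tau^2A_{h,1}A_{h,2})$. Then for all $n\in\{1,\dots,N\}$, \[\big\|e^{-t_nA_h}P_h-S_{h,\tau}^{n-1}(I+\tau A_{h,2})^{-1}(I+\tau A_{h,1})^{-1}P_h\big\|_{\mathcal L(H)}\le C\frac{\tau}{t_n},\] with $C$ independent of $h$, $\tau$, $n$.
   Context: $(H,(\cdot,\cdot)_H,\|\cdot\|_H)$ is a real Hilbert space with complexification $H_{\mathbb C}$; $C$ denotes generic constants independent of $h$, $\tau$, $n$. Condition (A): $A:\mathrm{dom}(A)\subset H\to H$ and $A_\ell:\mathrm{dom}(A_\ell)\subset H\to H$ ($\ell=1,2$) are linear with $A=A_1+A_2$ on $\mathrm{dom}(A_1)\cap\mathrm{dom}(A_2)\subseteq\mathrm{dom}(A)$; $A$ is densely defined, positive and sectorial: there is $\varphi\in(0,\pi/2)$ such that $0$ and $S_\varphi=\{\lambda\in\mathbb C:\varphi<|\arg\lambda|\le\pi\}$ lie in the resolvent set and $\|(A-\lambda I)^{-1}\|_{\mathcal L(H_{\mathbb C})}\le C/|\lambda|$ on $S_\varphi$; $A_\ell A^{-1}$ is a well-defined bounded operator on $H$. Condition (P): $V_h\subset H$ ($h\in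 I\subset(0,\infty)$) are finite-dimensional subspaces and $P_h:H\to V_h$ bounded projections with $\|(I-P_h)v\|_H\le Ch^2\|Av\|_H$ for $v\in\mathrm{dom}(A)$. Condition (Ah): $V_h$ carries an inner product with norm $\|\cdot\|_{V_h}$, $\|v_h\|_H\le C\|v_h\|_{V_h}$, and $A_h,A_{h,1},A_{h,2}\in\mathcal L(V_h)$ satisfy for all $v_h,w_h\in V_h$, $\ell=1,2$: (a) $(A_hv_h,v_h)_H\ge C\|v_h\|^2_{V_h}$; (b) $|(A_hv_h,w_h)_H|\le C\|v_h\|_{V_h}\|w_h\|_{V_h}$; (c) $A_h=A_{h,1}+A_{h,2}$; (d) $(A_{h,\ell}v_h,v_h)_H\ge0$; (e) $\|A_{h,\ell}P_h\|_{\mathcal L(H)}\le Ch^{-2}$; (f) $\|(P_hA_\ell-A_{h,\ell}P_h)v\|_H\le C\|Av\|_H$ for $v\in\mathrm{dom}(A)$; (g) $\|A^{-1}-A_h^{-1}P_h\|_{\mathcal L(H)}\le Ch^2$. $e^{-tA_h}$ is the semigroup generated by $-A_h$ on $V_h$; operators on $V_h$ composed with $P_h$ are regarded as operators on $H$ and $\|\cdot\|_{\mathcal L(H)}$ is the operator norm w.r.t. $\|\cdot\|_H$. *)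

theory Defs
  imports "HOL-Analysis.Analysis"
begin

definition lin_on :: "'a::real_vector set \<Rightarrow> ('a \<Rightarrow> 'b::real_vector) \<Rightarrow> bool" where
  "lin_on V f \<longleftrightarrow> (\<forall>x\<in>V. \<forall>y\<in>V. f (x + y) = f x + f y) \<and> (\<forall>x\<in>V. \<forall>c. f (c *\<^sub>R x) = c *\<^sub>R f x)"

definition op_on :: "'a::real_vector set \<Rightarrow> ('a \<Rightarrow> 'a) \<Rightarrow> bool" where
  "op_on V f \<longleftrightarrow> lin_on V f \<and> f ` V \<subseteq> V"

definition fin_dim_subspace :: "'a::real_vector set \<Rightarrow> bool" where
  "fin_dim_subspace V \<longleftrightarrow> subspace V \<and> (\<exists>B. finite B \<and> V = span B)"

definition inner_product_on :: "'a::real_vector set \<Rightarrow> ('a \<Rightarrow> 'a \<Rightarrow> real) \<Rightarrow> bool" where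
  "inner_product_on V ip \<longleftrightarrow>
     (\<forall>x\<in>V. \<forall>y\<in>V. ip x y = ip y x) \<and>
     (\<forall>x\<in>V. \<forall>y\<in>V. \<forall>z\<in>V. ip (x + y) z = ip x z + ip y z) \<and>
     (\<forall>x\<in>V. \<forall>y\<in>V. \<forall>c. ip (c *\<^sub>R x) y = c * ip x y) \<and>
     (\<forall>x\<in>V. x \<noteq> 0 \<longrightarrow> ip x x > 0)"

text \<open>Complexification of an operator A on H: the complex space H_C is modelled as H \<times> H
  (u + i v \<leftrightarrow> (u,v)), with norm sqrt(|u|^2+|v|^2) (the product norm). This is (A - \<lambda> I)(u + i v).\<close>
definition cplx_shift :: "('a::real_vector \<Rightarrow> 'a) \<Rightarrow> complex \<Rightarrow> 'a \<times> 'a \<Rightarrow> 'a \<times> 'a" where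
  "cplx_shift A z p = (A (fst p) - Re z *\<^sub>R fst p + Im z *\<^sub>R snd p,
                        A (snd p) - Im z *\<^sub>R fst p - Re z *\<^sub>R snd p)"

text \<open>Sector S_phi = {lambda : phi < |arg lambda| <= pi}  (Arg takes values in (-pi, pi]).\<close>
definition sector :: "real \<Rightarrow> complex set" where
  "sector \<phi> = {z. z \<noteq> 0 \<and> \<phi> < \<bar>Arg z\<bar>}"

definition cond_A :: "'a::{real_inner,complete_space} set \<Rightarrow> ('a \<Rightarrow> 'a) \<Rightarrow> 'a set \<Rightarrow> ('a \<Rightarrow> 'a)
                     \<Rightarrow> 'a set \<Rightarrow> ('a \<Rightarrow> 'a) \<Rightarrow> bool" where
  "cond_A D A D1 A1 D2 A2 \<longleftrightarrow>
     subspace D \<and> subspace D1 \<and> subspace D2 \<and>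
     lin_on D A \<and> lin_on D1 A1 \<and> lin_on D2 A2 \<and>
     D1 \<inter> D2 \<subseteq> D \<and> (\<forall>v\<in>D1 \<inter> D2. A v = A1 v + A2 v) \<and>
     closure D = UNIV \<and>
     (\<forall>v\<in>D. inner (A v) v \<ge> 0) \<and>
     \<comment> \<open>0 lies in the resolvent set\<close>
     bij_betw A D UNIV \<and> (\<exists>C. \<forall>v\<in>D. norm v \<le> C * norm (A v)) \<and>
     \<comment> \<open>sectoriality\<close>
     (\<exists>\<phi> C. 0 < \<phi> \<and> \<phi> < pi / 2 \<and>
        (\<forall>z\<in>sector \<phi>. bij_betw (cplx_shift A z) (D \<times> D) UNIV \<and>
           (\<forall>p\<in>D \<times> D. norm p \<le> C / cmod z * norm (cplx_shift A z p)))) \<and>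
     \<comment> \<open>A_l A^{-1} well defined and bounded on H\<close>
     (\<exists>C. \<forall>f. the_inv_into D A f \<in> D1 \<and> norm (A1 (the_inv_into D A f)) \<le> C * norm f) \<and>
     (\<exists>C. \<forall>f. the_inv_into D A f \<in> D2 \<and> norm (A2 (the_inv_into D A f)) \<le> C * norm f)"

definition exp_op :: "real \<Rightarrow> ('a::real_normed_vector \<Rightarrow> 'a) \<Rightarrow> 'a \<Rightarrow> 'a" where
  "exp_op t B v = (\<Sum>k. ((- t) ^ k / fact k) *\<^sub>R (B ^^ k) v)"

end

(* Since A_{h,1} and A_{h,2} are commuting self-adjoint operators on the finite-dimensional
   space V_h, they have a common orthonormal eigenbasis, built from maximisers of Rayleigh
   quotients. In this basis e^{-t A_h} and the splitting scheme act diagonally, so the error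
   reduces to the scalar estimate
     |e^{-n (x + y)} - ((1 + x y) / ((1 + x) (1 + y)))^(n - 1) / ((1 + x) (1 + y))| <= C / n
   for x, y >= 0, applied to x = tau a and y = tau b for the eigenvalues a, b of A_{h,1}, A_{h,2}.
   This bounds the error by C (tau / t_n) ||P_h f||, and it remains to bound ||P_h|| uniformly
   in h. Solving (A + h^{-2}) u = g with the resolvent estimate of the sectorial operator A
   splits g = h^{-2} u + A u. Condition (P) controls P_h (h^{-2} u); for w = A u, the
   self-adjointness of A_h gives ||P_h w||^2 <= ||A_h^{-1} P_h w|| ||A_h P_h w||, which is
   O(h^2) O(h^{-2}) ||g||^2 by conditions (g) and (e). *)

theory Submission
  imports Defs
begin

definition finite_orthonormal :: "'a::real_inner set \<Rightarrow> bool" where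
  "finite_orthonormal E \<longleftrightarrow> finite E \<and> (\<forall>e\<in>E. norm e = 1) \<and> pairwise orthogonal E"

definition lincomb :: "'a::real_vector set \<Rightarrow> ('a \<Rightarrow> real) \<Rightarrow> 'a" where
  "lincomb E c = (\<Sum>e\<in>E. c e *\<^sub>R e)"

lemma finite_orthonormal_subset: "finite_orthonormal E \<Longrightarrow> F \<subseteq> E \<Longrightarrow> finite_orthonormal F"
  unfolding finite_orthonormal_def by (auto intro: finite_subset pairwise_subset)

lemma finite_orthonormal_independent: "finite_orthonormal E \<Longrightarrow> independent E"
  unfolding finite_orthonormal_def by (metis norm_zero pairwise_orthogonal_independent zero_neq_one)

lemma finite_orthonormal_insert:
  assumes "finite_orthonormal E" "norm e = 1" "\<forall>x\<in>E. inner e x = 0"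
  shows "finite_orthonormal (insert e E)"
  using assms unfolding finite_orthonormal_def
  by (auto simp: pairwise_insert orthogonal_def inner_commute)

lemma inner_lincomb_basis:
  assumes "finite_orthonormal E" "e \<in> E"
  shows "inner (lincomb E c) e = c e"
proof -
  have "inner (lincomb E c) e = (\<Sum>x\<in>E. c x * inner x e)"
    by (simp add: lincomb_def inner_sum_left)
  also have "\<dots> = c e * inner e e + (\<Sum>x\<in>E - {e}. c x * inner x e)"
    using assms by (simp add: finite_orthonormal_def sum.remove)
  also have "(\<Sum>x\<in>E - {e}. c x * inner x e) = 0"
    using assms by (intro sum.neutral) (auto simp: finite_orthonormal_def pairwise_def orthogonal_def)
  finally show ?thesis
    using assms by (simp add: finite_orthonormal_def flip: power2_norm_eq_inner)
qed

lemma lincomb_in_span: "lincomb E c \<in> span E"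
  unfolding lincomb_def by (intro span_sum span_scale span_base)

lemma lincomb_add: "lincomb E c + lincomb E d = lincomb E (\<lambda>e. c e + d e)"
  unfolding lincomb_def by (simp add: sum.distrib scaleR_add_left)

lemma lincomb_diff: "lincomb E c - lincomb E d = lincomb E (\<lambda>e. c e - d e)"
  unfolding lincomb_def by (simp add: sum_subtractf scaleR_diff_left)

lemma scaleR_lincomb: "r *\<^sub>R lincomb E c = lincomb E (\<lambda>e. r * c e)"
  unfolding lincomb_def by (simp add: scaleR_sum_right)

lemma lincomb_eq_iff:
  assumes "finite_orthonormal E"
  shows "lincomb E c = lincomb E d \<longleftrightarrow> (\<forall>e\<in>E. c e = d e)"
proof
  show "lincomb E c = lincomb E d \<Longrightarrow> \<forall>e\<in>E. c e = d e"
    using inner_lincomb_basis[OF assms] by metis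
  show "\<forall>e\<in>E. c e = d e \<Longrightarrow> lincomb E c = lincomb E d"
    unfolding lincomb_def by (intro sum.cong) auto
qed

lemma lincomb_coordinates:
  assumes "finite_orthonormal E" "v \<in> span E"
  shows "lincomb E (\<lambda>e. inner v e) = v"
proof -
  obtain c where "v = lincomb E c"
    using assms span_finite[of E] by (auto simp: finite_orthonormal_def lincomb_def)
  then show ?thesis
    using assms(1) by (simp add: lincomb_eq_iff inner_lincomb_basis)
qed

lemma inner_lincomb:
  assumes "finite_orthonormal E"
  shows "inner (lincomb E c) (lincomb E d) = (\<Sum>e\<in>E. c e * d e)"
  by (simp add: lincomb_def[of E d] inner_sum_right inner_lincomb_basis[OF assms] mult.commute)

lemma norm_lincomb_power2:
  assumes "finite_orthonormal E"
  shows "(norm (lincomb E c))\<^sup>2 = (\<Sum>e\<in>E. (c e)\<^sup>2)"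
  unfolding power2_norm_eq_inner inner_lincomb[OF assms] by (simp add: power2_eq_square)

lemma norm_lincomb_mult_le:
  assumes "finite_orthonormal E" "0 \<le> M" "\<forall>e\<in>E. \<bar>m e\<bar> \<le> M"
  shows "norm (lincomb E (\<lambda>e. m e * c e)) \<le> M * norm (lincomb E c)"
proof -
  have "(norm (lincomb E (\<lambda>e. m e * c e)))\<^sup>2 = (\<Sum>e\<in>E. (m e)\<^sup>2 * (c e)\<^sup>2)"
    by (simp add: norm_lincomb_power2[OF assms(1)] power_mult_distrib)
  also have "\<dots> \<le> (\<Sum>e\<in>E. M\<^sup>2 * (c e)\<^sup>2)"
    using assms(2,3) by (intro sum_mono mult_right_mono) (auto simp flip: abs_le_square_iff)
  also have "\<dots> = (M * norm (lincomb E c))\<^sup>2"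
    by (simp add: norm_lincomb_power2[OF assms(1)] power_mult_distrib sum_distrib_left)
  finally show ?thesis
    using assms(2) by (meson norm_ge_zero power2_le_imp_le mult_nonneg_nonneg)
qed

lemma fin_dim_subspace_subset:
  assumes "fin_dim_subspace V" "subspace U" "U \<subseteq> V"
  shows "fin_dim_subspace U"
proof -
  obtain F where F: "finite F" "V = span F"
    using assms(1) by (auto simp: fin_dim_subspace_def)
  obtain B where B: "B \<subseteq> U" "independent B" "U \<subseteq> span B"
    by (rule basis_exists)
  have "finite B"
    using independent_span_bound[OF F(1) B(2)] B(1) assms(3) F(2) by auto
  moreover have "span B = U"
    using B(1,3) span_minimal[OF B(1) assms(2)] by auto
  ultimately show ?thesis
    using assms(2) by (auto simp: fin_dim_subspace_def)
qed

lemma finite_orthonormal_basis_exists: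
  assumes "fin_dim_subspace V"
  obtains E where "finite_orthonormal E" "span E = V"
proof -
  obtain F where F: "subspace V" "finite F" "V = span F"
    using assms by (auto simp: fin_dim_subspace_def)
  obtain C where C: "finite C" "span C = V" "pairwise orthogonal C"
    using basis_orthogonal[OF F(2)] F(3) by blast
  define E where "E = (\<lambda>x. x /\<^sub>R norm x) ` (C - {0})"
  have "span E = span (C - {0})"
    unfolding E_def using C(1) by (intro span_image_scale) auto
  then have "span E = V"
    using C(2) by simp
  moreover have "finite_orthonormal E"
    using C(1,3) unfolding finite_orthonormal_def E_def pairwise_def
    by (auto simp: orthogonal_def)
  ultimately show ?thesis
    using that by blast
qed

lemma lin_on_subset: "lin_on V T \<Longrightarrow> U \<subseteq> V \<Longrightarrow> lin_on U T"
  unfolding lin_on_def by blast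

lemma lin_on_zero:
  assumes "subspace V" "lin_on V T"
  shows "T 0 = 0"
proof -
  have "T (0 *\<^sub>R 0) = 0 *\<^sub>R T 0"
    using assms subspace_0 unfolding lin_on_def by blast
  then show ?thesis
    by simp
qed

lemma lin_on_lincomb:
  assumes "lin_on V T" "subspace V" "finite E" "E \<subseteq> V"
  shows "T (lincomb E c) = (\<Sum>e\<in>E. c e *\<^sub>R T e)"
  unfolding lincomb_def using assms(3,4)
proof (induction E rule: finite_induct)
  case empty
  show ?case
    using lin_on_zero[OF assms(2,1)] by simp
next
  case (insert x E)
  then have "(\<Sum>e\<in>E. c e *\<^sub>R e) \<in> V" "x \<in> V" "c x *\<^sub>R x \<in> V"
    using assms(2) by (auto intro: subspace_sum subspace_scale)
  then have "T (c x *\<^sub>R x + (\<Sum>e\<in>E. c e *\<^sub>R e)) = T (c x *\<^sub>R x) + T (\<Sum>e\<in>E. c e *\<^sub>R e)"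
    "T (c x *\<^sub>R x) = c x *\<^sub>R T x"
    using assms(1) unfolding lin_on_def by blast+
  with insert show ?case
    by simp
qed

lemma lin_on_expansion:
  assumes "lin_on V T" "finite_orthonormal E" "span E = V" "v \<in> V"
  shows "T v = (\<Sum>e\<in>E. inner v e *\<^sub>R T e)"
proof -
  have "T v = T (lincomb E (\<lambda>e. inner v e))"
    using lincomb_coordinates[OF assms(2)] assms(3,4) by simp
  also have "\<dots> = (\<Sum>e\<in>E. inner v e *\<^sub>R T e)"
    using assms(2,3) by (intro lin_on_lincomb[OF assms(1)]) (auto simp: finite_orthonormal_def intro: span_base)
  finally show ?thesis .
qed

lemma subspace_eigenspace:
  assumes "subspace V" "lin_on V T"
  shows "subspace {w \<in> V. T w = \<mu> *\<^sub>R w}"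
  using assms lin_on_zero[OF assms] unfolding subspace_def lin_on_def by (simp add: scaleR_add_right)

lemma subspace_orthogonal_in: "subspace V \<Longrightarrow> subspace {w \<in> V. inner w e = 0}"
  unfolding subspace_def by (simp add: inner_add_left)

lemma op_on_eigenspace:
  assumes "subspace V" "op_on V T1" "op_on V T2" "\<forall>v\<in>V. T1 (T2 v) = T2 (T1 v)"
  shows "op_on {w \<in> V. T1 w = \<alpha> *\<^sub>R w} T2"
proof -
  define U where "U = {w \<in> V. T1 w = \<alpha> *\<^sub>R w}"
  have lin2: "lin_on V T2" and into2: "\<forall>v\<in>V. T2 v \<in> V"
    using assms(3) by (simp_all add: op_on_def image_subset_iff)
  have "T2 w \<in> U" if "w \<in> U" for w
  proof -
    have w: "w \<in> V" "T1 w = \<alpha> *\<^sub>R w"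
      using that unfolding U_def by auto
    have "T1 (T2 w) = T2 (\<alpha> *\<^sub>R w)"
      using assms(4) w by simp
    also have "\<dots> = \<alpha> *\<^sub>R T2 w"
      using lin2 w(1) unfolding lin_on_def by blast
    finally show ?thesis
      using into2 w(1) unfolding U_def by simp
  qed
  moreover have "lin_on U T2"
    by (rule lin_on_subset[OF lin2]) (auto simp: U_def)
  ultimately show ?thesis
    unfolding U_def[symmetric] op_on_def by auto
qed

lemma op_on_orthogonal_complement:
  assumes "op_on V T" "\<forall>v\<in>V. \<forall>w\<in>V. inner (T v) w = inner v (T w)" "e \<in> V" "T e = \<alpha> *\<^sub>R e"
  shows "op_on {w \<in> V. inner w e = 0} T"
proof -
  define W where "W = {w \<in> V. inner w e = 0}"
  have "lin_on V T"
    using assms(1) by (simp add: op_on_def)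
  then have "lin_on W T"
    by (rule lin_on_subset) (auto simp: W_def)
  moreover have "T w \<in> W" if "w \<in> W" for w
  proof -
    have w: "w \<in> V" "inner w e = 0"
      using that unfolding W_def by auto
    have "inner (T w) e = inner w (T e)"
      using assms(2) w(1) assms(3) by simp
    then have "inner (T w) e = 0"
      using assms(4) w(2) by simp
    moreover have "T w \<in> V"
      using assms(1) w(1) unfolding op_on_def by auto
    ultimately show ?thesis
      unfolding W_def by simp
  qed
  ultimately show ?thesis
    unfolding W_def[symmetric] op_on_def by auto
qed

lemma span_insert_inter_cball:
  assumes "norm f = 1" "\<And>y. y \<in> F \<Longrightarrow> orthogonal f y"
  shows "span (insert f F) \<inter> cball 0 r
    = (\<lambda>(w, k). w + k *\<^sub>R f) ` ((span F \<inter> cball 0 r) \<times> cball 0 r) \<inter> cball 0 r"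
proof (intro equalityI subsetI)
  fix v assume v: "v \<in> span (insert f F) \<inter> cball 0 r"
  then obtain k where w: "v - k *\<^sub>R f \<in> span F"
    using span_breakdown_eq by blast
  have "orthogonal (v - k *\<^sub>R f) (k *\<^sub>R f)"
    using orthogonal_to_span[OF w assms(2)] by (simp add: orthogonal_commute orthogonal_clauses)
  then have pythagoras: "(norm v)\<^sup>2 = (norm (v - k *\<^sub>R f))\<^sup>2 + \<bar>k\<bar>\<^sup>2"
    using norm_add_Pythagorean[of "v - k *\<^sub>R f" "k *\<^sub>R f"] assms(1) by simp
  have "norm v \<le> r"
    using v by simp
  then have "0 \<le> r" "(norm v)\<^sup>2 \<le> r\<^sup>2"
    by (auto intro: order_trans[OF norm_ge_zero] power_mono)
  then have "(norm (v - k *\<^sub>R f))\<^sup>2 \<le> r\<^sup>2" "\<bar>k\<bar>\<^sup>2 \<le> r\<^sup>2"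
    using pythagoras zero_le_power2[of "norm (v - k *\<^sub>R f)"] zero_le_power2[of "\<bar>k\<bar>"] by linarith+
  then have "norm (v - k *\<^sub>R f) \<le> r" "\<bar>k\<bar> \<le> r"
    using \<open>0 \<le> r\<close> power2_le_imp_le by blast+
  then have "(v - k *\<^sub>R f, k) \<in> (span F \<inter> cball 0 r) \<times> cball 0 r"
    using w by simp
  then show "v \<in> (\<lambda>(w, k). w + k *\<^sub>R f) ` ((span F \<inter> cball 0 r) \<times> cball 0 r) \<inter> cball 0 r"
    using v by (intro IntI rev_image_eqI) auto
next
  fix v assume "v \<in> (\<lambda>(w, k). w + k *\<^sub>R f) ` ((span F \<inter> cball 0 r) \<times> cball 0 r) \<inter> cball 0 r"
  then obtain w k where "w \<in> span F" "v = w + k *\<^sub>R f" "v \<in> cball 0 r"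
    by force
  moreover have "span F \<subseteq> span (insert f F)"
    by (simp add: span_mono subset_insertI)
  ultimately show "v \<in> span (insert f F) \<inter> cball 0 r"
    by (metis IntI in_mono span_add span_base span_scale insertI1)
qed

lemma compact_span_inter_cball:
  assumes "finite_orthonormal E"
  shows "compact (span E \<inter> cball 0 r)"
proof -
  have "finite E"
    using assms by (simp add: finite_orthonormal_def)
  then show ?thesis
    using assms
  proof (induction E arbitrary: r rule: finite_induct)
    case empty
    have "span {} \<inter> cball 0 r \<subseteq> {0}"
      by auto
    then show ?case
      using finite_subset by (auto intro: finite_imp_compact)
  next
    case (insert f F)
    have "norm f = 1" "\<And>y. y \<in> F \<Longrightarrow> orthogonal f y"
      using insert.prems insert.hyps unfolding finite_orthonormal_def pairwise_def by auto
    moreover have "compact (span F \<inter> cball 0 r)"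
      using insert.IH insert.prems finite_orthonormal_subset by blast
    then have "compact ((\<lambda>(w, k). w + k *\<^sub>R f) ` ((span F \<inter> cball 0 r) \<times> cball 0 r))"
      unfolding case_prod_unfold by (intro compact_continuous_image compact_Times compact_cball continuous_intros)
    ultimately show ?case
      by (simp add: span_insert_inter_cball compact_Int_closed)
  qed
qed

lemma compact_unit_sphere_fin_dim_subspace:
  fixes V :: "'a::real_inner set"
  assumes "fin_dim_subspace V"
  shows "compact (V \<inter> {v. norm v = 1})"
proof -
  obtain E where E: "finite_orthonormal E" "span E = V"
    using finite_orthonormal_basis_exists[OF assms] by blast
  have "V \<inter> {v. norm v = 1} = (span E \<inter> cball 0 1) \<inter> {v. norm v = 1}"
    unfolding E(2) by auto
  moreover have "closed {v::'a. norm v = 1}"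
    by (intro closed_Collect_eq continuous_intros)
  ultimately show ?thesis
    using compact_span_inter_cball[OF E(1), of 1] by (simp add: compact_Int_closed)
qed

lemma continuous_on_lin_on:
  fixes T :: "'a::real_inner \<Rightarrow> 'a"
  assumes "fin_dim_subspace V" "lin_on V T"
  shows "continuous_on V T"
proof -
  obtain E where E: "finite_orthonormal E" "span E = V"
    using finite_orthonormal_basis_exists[OF assms(1)] by blast
  have "continuous_on V (\<lambda>v. \<Sum>e\<in>E. inner v e *\<^sub>R T e)"
    by (intro continuous_on_sum continuous_on_scaleR continuous_on_inner continuous_on_id continuous_on_const)
  then show ?thesis
    using lin_on_expansion[OF assms(2) E] continuous_on_cong by fastforce
qed


section \<open>Commuting self-adjoint operators have a common eigenbasis\<close>

lemma linear_coeff_zero_if_quadratic_nonneg: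
  fixes a b :: real
  assumes "\<And>t. 0 \<le> 2 * t * a + t\<^sup>2 * b"
  shows "a = 0"
proof -
  define c where "c = \<bar>b\<bar> + 1"
  have "c > 0" "b - 2 * c < 0"
    unfolding c_def by (smt (verit) abs_ge_self)+
  define t where "t = - a / c"
  have "0 \<le> c\<^sup>2 * (2 * t * a + t\<^sup>2 * b)"
    using assms by simp
  also have "\<dots> = a\<^sup>2 * (b - 2 * c)"
    unfolding t_def using \<open>c > 0\<close> by (simp add: field_simps power2_eq_square)
  finally show ?thesis
    using \<open>b - 2 * c < 0\<close> by (simp add: zero_le_mult_iff)
qed

lemma rayleigh_quotient_maximum:
  assumes V: "fin_dim_subspace V" "V \<noteq> {0}" and T: "op_on V T"
  obtains v0 where "v0 \<in> V" "norm v0 = 1" "\<forall>v\<in>V. inner (T v) v \<le> inner (T v0) v0 * (norm v)\<^sup>2"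
proof -
  have sub: "subspace V" and lin: "lin_on V T"
    using V(1) T by (auto simp: fin_dim_subspace_def op_on_def)
  define S where "S = V \<inter> {v. norm v = 1}"
  obtain u where "u \<in> V" "u \<noteq> 0"
    using V(2) subspace_0[OF sub] by blast
  then have "u /\<^sub>R norm u \<in> S"
    unfolding S_def using sub by (simp add: subspace_scale)
  then have "S \<noteq> {}"
    by blast
  moreover have "continuous_on S T"
    by (rule continuous_on_subset[OF continuous_on_lin_on[OF V(1) lin]]) (auto simp: S_def)
  then have "continuous_on S (\<lambda>v. inner (T v) v)"
    by (intro continuous_intros)
  ultimately obtain v0 where v0: "v0 \<in> S" "\<forall>v\<in>S. inner (T v) v \<le> inner (T v0) v0"
    using continuous_attains_sup[OF compact_unit_sphere_fin_dim_subspace[OF V(1)]] unfolding S_def by blast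
  have "inner (T v) v \<le> inner (T v0) v0 * (norm v)\<^sup>2" if "v \<in> V" for v
  proof (cases "v = 0")
    case True
    then show ?thesis
      using lin_on_zero[OF sub lin] by simp
  next
    case False
    define u where "u = v /\<^sub>R norm v"
    have "u \<in> S"
      unfolding S_def u_def using False that sub by (simp add: subspace_scale)
    then have "inner (T u) u \<le> inner (T v0) v0"
      using v0(2) by blast
    moreover have "inner (T u) u = inner (T v) v / (norm v)\<^sup>2"
      unfolding u_def using lin that by (simp add: lin_on_def power2_eq_square divide_inverse)
    ultimately show ?thesis
      using False by (simp add: divide_le_eq mult.commute)
  qed
  then show ?thesis
    using that v0(1) unfolding S_def by blast
qed

lemma self_adjoint_eigenvector_exists:
  assumes V: "fin_dim_subspace V" "V \<noteq> {0}" and T: "op_on V T"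
    and self_adjoint: "\<forall>v\<in>V. \<forall>w\<in>V. inner (T v) w = inner v (T w)"
  obtains e \<mu> where "e \<in> V" "norm e = 1" "T e = \<mu> *\<^sub>R e"
proof -
  have sub: "subspace V" and lin: "lin_on V T" and into: "\<forall>v\<in>V. T v \<in> V"
    using V(1) T by (auto simp: fin_dim_subspace_def op_on_def)
  obtain v0 where v0: "v0 \<in> V" "norm v0 = 1"
    and rayleigh: "\<forall>v\<in>V. inner (T v) v \<le> inner (T v0) v0 * (norm v)\<^sup>2"
    by (rule rayleigh_quotient_maximum[OF V T])
  define \<mu> where "\<mu> = inner (T v0) v0"
  define w where "w = \<mu> *\<^sub>R v0 - T v0"
  have "w \<in> V"
    unfolding w_def using v0 into sub by (simp add: subspace_diff subspace_scale)
  \<comment> \<open>The Rayleigh quotient is maximal at \<open>v0\<close>, so it cannot increase in the direction \<open>w\<close>.\<close>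
  have "0 \<le> 2 * t * inner w w + t\<^sup>2 * (\<mu> * (norm w)\<^sup>2 - inner (T w) w)" for t
  proof -
    have "v0 + t *\<^sub>R w \<in> V"
      using v0 \<open>w \<in> V\<close> sub by (simp add: subspace_add subspace_scale)
    then have "inner (T (v0 + t *\<^sub>R w)) (v0 + t *\<^sub>R w) \<le> \<mu> * (norm (v0 + t *\<^sub>R w))\<^sup>2"
      using rayleigh unfolding \<mu>_def by blast
    moreover have "T (v0 + t *\<^sub>R w) = T v0 + t *\<^sub>R T w"
      using lin v0 \<open>w \<in> V\<close> sub unfolding lin_on_def by (simp add: subspace_scale)
    moreover have "inner (T w) v0 = inner (T v0) w"
      using self_adjoint v0 \<open>w \<in> V\<close> by (metis inner_commute)
    moreover have "inner v0 v0 = 1"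
      using v0 by (simp flip: power2_norm_eq_inner)
    ultimately have "0 \<le> 2 * t * (\<mu> * inner v0 w - inner (T v0) w) + t\<^sup>2 * (\<mu> * inner w w - inner (T w) w)"
      unfolding power2_norm_eq_inner \<mu>_def
      by (simp add: inner_commute[of w v0] algebra_simps power2_eq_square)
    moreover have "\<mu> * inner v0 w - inner (T v0) w = inner w w"
      unfolding w_def by (simp add: inner_diff_left inner_commute)
    ultimately show ?thesis
      by (simp add: power2_norm_eq_inner)
  qed
  then have "inner w w = 0"
    by (rule linear_coeff_zero_if_quadratic_nonneg)
  then have "T v0 = \<mu> *\<^sub>R v0"
    unfolding w_def by simp
  then show ?thesis
    using that v0 by blast
qed

lemma commuting_self_adjoint_common_eigenvector:
  assumes V: "fin_dim_subspace V" "V \<noteq> {0}" and T: "op_on V T1" "op_on V T2"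
    and self_adjoint1: "\<forall>v\<in>V. \<forall>w\<in>V. inner (T1 v) w = inner v (T1 w)"
    and self_adjoint2: "\<forall>v\<in>V. \<forall>w\<in>V. inner (T2 v) w = inner v (T2 w)"
    and commute: "\<forall>v\<in>V. T1 (T2 v) = T2 (T1 v)"
  obtains e \<alpha> \<beta> where "e \<in> V" "norm e = 1" "T1 e = \<alpha> *\<^sub>R e" "T2 e = \<beta> *\<^sub>R e"
proof -
  have sub: "subspace V"
    using V(1) by (simp add: fin_dim_subspace_def)
  obtain e1 \<alpha> where e1: "e1 \<in> V" "norm e1 = 1" "T1 e1 = \<alpha> *\<^sub>R e1"
    by (rule self_adjoint_eigenvector_exists[OF V T(1) self_adjoint1])
  define U where "U = {w \<in> V. T1 w = \<alpha> *\<^sub>R w}"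
  have "U \<subseteq> V"
    unfolding U_def by blast
  have "subspace U"
    unfolding U_def using sub T(1) by (intro subspace_eigenspace) (simp_all add: op_on_def)
  then have "fin_dim_subspace U"
    by (rule fin_dim_subspace_subset[OF V(1) _ \<open>U \<subseteq> V\<close>])
  have "e1 \<in> U" "e1 \<noteq> 0"
    using e1 unfolding U_def by auto
  then have "U \<noteq> {0}"
    by blast
  have "op_on U T2"
    unfolding U_def by (rule op_on_eigenspace[OF sub T commute])
  have "\<forall>v\<in>U. \<forall>w\<in>U. inner (T2 v) w = inner v (T2 w)"
    using self_adjoint2 \<open>U \<subseteq> V\<close> by blast
  then obtain e \<beta> where e: "e \<in> U" "norm e = 1" "T2 e = \<beta> *\<^sub>R e"
    by (rule self_adjoint_eigenvector_exists[OF \<open>fin_dim_subspace U\<close> \<open>U \<noteq> {0}\<close> \<open>op_on U T2\<close>])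
  have "e \<in> V" "T1 e = \<alpha> *\<^sub>R e"
    using e(1) unfolding U_def by auto
  then show ?thesis
    using that e(2,3) by blast
qed

lemma orthonormal_insert_complement:
  assumes "subspace V" "e \<in> V" "norm e = 1" "finite_orthonormal F" "span F = {w \<in> V. inner w e = 0}"
  shows "finite_orthonormal (insert e F)" "span (insert e F) = V" "e \<notin> F"
proof -
  have F: "F \<subseteq> {w \<in> V. inner w e = 0}"
    using assms(5) span_superset by blast
  then show "finite_orthonormal (insert e F)"
    using assms(3,4) by (intro finite_orthonormal_insert) (auto simp: inner_commute)
  show "e \<notin> F"
    using F assms(3) by (auto simp: dot_square_norm)
  show "span (insert e F) = V"
  proof
    show "span (insert e F) \<subseteq> V"
      using F assms(1,2) by (intro span_minimal) auto
    show "V \<subseteq> span (insert e F)"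
    proof
      fix v assume "v \<in> V"
      have "inner (v - inner v e *\<^sub>R e) e = 0"
        using assms(3) by (simp add: inner_diff_left dot_square_norm)
      moreover have "v - inner v e *\<^sub>R e \<in> V"
        using \<open>v \<in> V\<close> assms(1,2) by (simp add: subspace_diff subspace_scale)
      ultimately have "v - inner v e *\<^sub>R e \<in> span F"
        unfolding assms(5) by blast
      then show "v \<in> span (insert e F)"
        using span_breakdown_eq by blast
    qed
  qed
qed

lemma dim_orthogonal_complement_less:
  assumes "fin_dim_subspace V" "e \<in> V" "norm e = 1"
  shows "dim {w \<in> V. inner w e = 0} < dim V"
proof -
  define W where "W = {w \<in> V. inner w e = 0}"
  have sub: "subspace V"
    using assms(1) by (simp add: fin_dim_subspace_def)
  then have "fin_dim_subspace W"
    unfolding W_def by (intro fin_dim_subspace_subset[OF assms(1)] subspace_orthogonal_in) auto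
  then obtain F where F: "finite_orthonormal F" "span F = W"
    using finite_orthonormal_basis_exists by blast
  note insert_F = orthonormal_insert_complement[OF sub assms(2,3) F(1) F(2)[unfolded W_def]]
  have "span F = span W"
    unfolding F(2)[symmetric] by (simp add: span_span)
  then have "dim W = card F"
    by (rule dim_eq_card[OF _ finite_orthonormal_independent[OF F(1)]])
  also have "\<dots> < card (insert e F)"
    using insert_F(3) F(1) by (simp add: finite_orthonormal_def)
  also have "\<dots> = dim V"
  proof -
    have "span V = V"
      using sub by (rule span_eq_iff[THEN iffD2])
    then have "span (insert e F) = span V"
      using insert_F(2) by metis
    then show ?thesis
      using dim_eq_card finite_orthonormal_independent[OF insert_F(1)] by metis
  qed
  finally show ?thesis
    unfolding W_def .
qed


lemma commuting_self_adjoint_eigenbasis: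
  assumes "fin_dim_subspace V" and "op_on V T1" "op_on V T2"
    and "\<forall>v\<in>V. \<forall>w\<in>V. inner (T1 v) w = inner v (T1 w)"
    and "\<forall>v\<in>V. \<forall>w\<in>V. inner (T2 v) w = inner v (T2 w)"
    and "\<forall>v\<in>V. T1 (T2 v) = T2 (T1 v)"
  shows "\<exists>E. finite_orthonormal E \<and> span E = V \<and> (\<forall>e\<in>E. \<exists>\<alpha> \<beta>. T1 e = \<alpha> *\<^sub>R e \<and> T2 e = \<beta> *\<^sub>R e)"
  using assms
proof (induction "dim V" arbitrary: V rule: less_induct)
  case less
  have sub: "subspace V"
    using less.prems(1) by (simp add: fin_dim_subspace_def)
  show ?case
  proof (cases "V = {0}")
    case True
    then show ?thesis
      by (intro exI[of _ "{}"]) (auto simp: finite_orthonormal_def)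
  next
    case False
    obtain e \<alpha> \<beta> where e: "e \<in> V" "norm e = 1" "T1 e = \<alpha> *\<^sub>R e" "T2 e = \<beta> *\<^sub>R e"
      by (rule commuting_self_adjoint_common_eigenvector[OF less.prems(1) False less.prems(2-)])
    define W where "W = {w \<in> V. inner w e = 0}"
    have "W \<subseteq> V"
      unfolding W_def by blast
    have "dim W < dim V"
      unfolding W_def by (rule dim_orthogonal_complement_less[OF less.prems(1) e(1,2)])
    moreover have "fin_dim_subspace W"
      unfolding W_def by (intro fin_dim_subspace_subset[OF less.prems(1)] subspace_orthogonal_in sub) auto
    moreover have "op_on W T1" "op_on W T2"
      unfolding W_def
      using op_on_orthogonal_complement[OF less.prems(2,4) e(1,3)]
        op_on_orthogonal_complement[OF less.prems(3,5) e(1,4)] .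
    moreover have "\<forall>v\<in>W. \<forall>w\<in>W. inner (T1 v) w = inner v (T1 w)"
      "\<forall>v\<in>W. \<forall>w\<in>W. inner (T2 v) w = inner v (T2 w)" "\<forall>v\<in>W. T1 (T2 v) = T2 (T1 v)"
      using less.prems(4-6) \<open>W \<subseteq> V\<close> by blast+
    ultimately have "\<exists>F. finite_orthonormal F \<and> span F = W \<and>
        (\<forall>e\<in>F. \<exists>\<alpha> \<beta>. T1 e = \<alpha> *\<^sub>R e \<and> T2 e = \<beta> *\<^sub>R e)"
      by (rule less.hyps)
    then obtain F where F: "finite_orthonormal F" "span F = W"
        "\<forall>e\<in>F. \<exists>\<alpha> \<beta>. T1 e = \<alpha> *\<^sub>R e \<and> T2 e = \<beta> *\<^sub>R e"
      by blast
    note insert_F = orthonormal_insert_complement[OF sub e(1,2) F(1) F(2)[unfolded W_def]]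
    have "\<forall>x\<in>insert e F. \<exists>\<alpha> \<beta>. T1 x = \<alpha> *\<^sub>R x \<and> T2 x = \<beta> *\<^sub>R x"
      using F(3) e(3,4) by blast
    then show ?thesis
      using insert_F(1,2) by blast
  qed
qed


section \<open>Diagonal operators\<close>

definition diagonal_op :: "'a::real_vector set \<Rightarrow> ('a \<Rightarrow> real) \<Rightarrow> ('a \<Rightarrow> 'a) \<Rightarrow> bool" where
  "diagonal_op E m T \<longleftrightarrow> (\<forall>c. T (lincomb E c) = lincomb E (\<lambda>e. m e * c e))"

lemma diagonal_op_eigenbasis:
  assumes "finite_orthonormal E" "span E = V" "lin_on V T" "\<forall>e\<in>E. T e = m e *\<^sub>R e"
  shows "diagonal_op E m T"
  unfolding diagonal_op_def
proof
  fix c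
  have "T (lincomb E c) = (\<Sum>e\<in>E. c e *\<^sub>R T e)"
    using assms(1,2) by (intro lin_on_lincomb[OF assms(3)]) (auto simp: finite_orthonormal_def intro: span_base)
  also have "\<dots> = lincomb E (\<lambda>e. m e * c e)"
    unfolding lincomb_def using assms(4) by (intro sum.cong) auto
  finally show "T (lincomb E c) = lincomb E (\<lambda>e. m e * c e)" .
qed

lemma diagonal_op_cong:
  assumes "\<forall>v\<in>span E. T v = T' v" "diagonal_op E m T'"
  shows "diagonal_op E m T"
  unfolding diagonal_op_def
proof
  fix c
  have "T (lincomb E c) = T' (lincomb E c)"
    using assms(1) lincomb_in_span by blast
  then show "T (lincomb E c) = lincomb E (\<lambda>e. m e * c e)"
    using assms(2) unfolding diagonal_op_def by simp
qed

lemma diagonal_op_id: "diagonal_op E (\<lambda>_. 1) (\<lambda>v. v)"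
  by (simp add: diagonal_op_def)

lemma diagonal_op_add:
  "diagonal_op E m T \<Longrightarrow> diagonal_op E m' T' \<Longrightarrow> diagonal_op E (\<lambda>e. m e + m' e) (\<lambda>v. T v + T' v)"
  by (simp add: diagonal_op_def lincomb_add distrib_right)

lemma diagonal_op_diff:
  "diagonal_op E m T \<Longrightarrow> diagonal_op E m' T' \<Longrightarrow> diagonal_op E (\<lambda>e. m e - m' e) (\<lambda>v. T v - T' v)"
  by (simp add: diagonal_op_def lincomb_diff left_diff_distrib)

lemma diagonal_op_scaleR:
  "diagonal_op E m T \<Longrightarrow> diagonal_op E (\<lambda>e. r * m e) (\<lambda>v. r *\<^sub>R T v)"
  by (simp add: diagonal_op_def scaleR_lincomb mult.assoc)

lemma diagonal_op_comp:
  "diagonal_op E m T \<Longrightarrow> diagonal_op E m' T' \<Longrightarrow> diagonal_op E (\<lambda>e. m e * m' e) (\<lambda>v. T (T' v))"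
  by (simp add: diagonal_op_def mult.assoc)

lemma diagonal_op_funpow:
  assumes "diagonal_op E m T"
  shows "diagonal_op E (\<lambda>e. m e ^ k) (T ^^ k)"
proof (induction k)
  case 0
  show ?case
    by (simp add: diagonal_op_def)
next
  case (Suc k)
  then show ?case
    using diagonal_op_comp[OF assms Suc] by (simp add: comp_def)
qed

lemma diagonal_op_exp_op:
  assumes "diagonal_op E m T"
  shows "diagonal_op E (\<lambda>e. exp (- (t * m e))) (exp_op t T)"
  unfolding diagonal_op_def
proof
  fix c
  have "((- t) ^ k / fact k) *\<^sub>R (T ^^ k) (lincomb E c)
      = (\<Sum>e\<in>E. ((- (t * m e)) ^ k /\<^sub>R fact k * c e) *\<^sub>R e)" for k
  proof -
    have "(T ^^ k) (lincomb E c) = lincomb E (\<lambda>e. m e ^ k * c e)"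
      using diagonal_op_funpow[OF assms] unfolding diagonal_op_def by simp
    moreover have "(- t) ^ k / fact k * (m e ^ k * c e) = (- (t * m e)) ^ k /\<^sub>R fact k * c e" for e
    proof -
      have "(- (t * m e)) ^ k = (- t) ^ k * m e ^ k"
        by (metis minus_mult_left power_mult_distrib)
      then show ?thesis
        by (simp add: divide_inverse mult_ac)
    qed
    ultimately show ?thesis
      by (simp add: lincomb_def scaleR_sum_right)
  qed
  moreover have "(\<lambda>k. \<Sum>e\<in>E. ((- (t * m e)) ^ k /\<^sub>R fact k * c e) *\<^sub>R e)
      sums lincomb E (\<lambda>e. exp (- (t * m e)) * c e)"
    unfolding lincomb_def by (intro sums_sum sums_scaleR_left sums_mult2 exp_converges)
  ultimately show "exp_op t T (lincomb E c) = lincomb E (\<lambda>e. exp (- (t * m e)) * c e)"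
    unfolding exp_op_def by (simp add: sums_iff)
qed

lemma norm_diagonal_op_le:
  assumes "finite_orthonormal E" "diagonal_op E m T" "0 \<le> M" "\<forall>e\<in>E. \<bar>m e\<bar> \<le> M" "v \<in> span E"
  shows "norm (T v) \<le> M * norm v"
proof -
  define c where "c = (\<lambda>e. inner v e)"
  have v: "v = lincomb E c"
    unfolding c_def using lincomb_coordinates[OF assms(1,5)] by simp
  then have "T v = lincomb E (\<lambda>e. m e * c e)"
    using assms(2) unfolding diagonal_op_def by simp
  then show ?thesis
    using norm_lincomb_mult_le[OF assms(1,3,4)] v by simp
qed

lemma bij_betw_diagonal_op:
  assumes E: "finite_orthonormal E" "span E = V" and T: "diagonal_op E m T" "\<forall>e\<in>E. m e \<noteq> 0"
  shows "bij_betw T V V"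
proof -
  have coordinates: "lincomb E (\<lambda>e. inner v e) = v" if "v \<in> V" for v
    using lincomb_coordinates[OF E(1)] that E(2) by simp
  have image: "T (lincomb E c) = lincomb E (\<lambda>e. m e * c e)" for c
    using T(1) unfolding diagonal_op_def by simp
  have "inj_on T V"
  proof
    fix v w assume vw: "v \<in> V" "w \<in> V" "T v = T w"
    then have "T (lincomb E (\<lambda>e. inner v e)) = T (lincomb E (\<lambda>e. inner w e))"
      by (simp add: coordinates)
    then have "\<forall>e\<in>E. m e * inner v e = m e * inner w e"
      unfolding image by (simp add: lincomb_eq_iff[OF E(1)])
    then have "lincomb E (\<lambda>e. inner v e) = lincomb E (\<lambda>e. inner w e)"
      using T(2) by (simp add: lincomb_eq_iff[OF E(1)])
    then show "v = w"
      using vw by (simp add: coordinates)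
  qed
  moreover have "T ` V = V"
  proof
    show "T ` V \<subseteq> V"
    proof
      fix u assume "u \<in> T ` V"
      then obtain v where "v \<in> V" "u = T v"
        by blast
      then have "u = lincomb E (\<lambda>e. m e * inner v e)"
        using image[of "\<lambda>e. inner v e"] by (simp add: coordinates)
      then show "u \<in> V"
        using lincomb_in_span E(2) by blast
    qed
    show "V \<subseteq> T ` V"
    proof
      fix v assume "v \<in> V"
      have "T (lincomb E (\<lambda>e. inner v e / m e)) = lincomb E (\<lambda>e. inner v e)"
        unfolding image using T(2) by (simp add: lincomb_eq_iff[OF E(1)])
      also have "\<dots> = v"
        using \<open>v \<in> V\<close> by (rule coordinates)
      finally have "T (lincomb E (\<lambda>e. inner v e / m e)) = v" .
      moreover have "lincomb E (\<lambda>e. inner v e / m e) \<in> V"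
        using lincomb_in_span E(2) by blast
      ultimately show "v \<in> T ` V"
        by (metis imageI)
    qed
  qed
  ultimately show ?thesis
    by (simp add: bij_betw_def)
qed

lemma diagonal_op_the_inv_into:
  assumes E: "finite_orthonormal E" "span E = V" and T: "diagonal_op E m T" "\<forall>e\<in>E. m e \<noteq> 0"
  shows "diagonal_op E (\<lambda>e. 1 / m e) (the_inv_into V T)"
  unfolding diagonal_op_def
proof
  fix c
  have "inj_on T V"
    using bij_betw_diagonal_op[OF assms] by (simp add: bij_betw_def)
  moreover have "T (lincomb E (\<lambda>e. 1 / m e * c e)) = lincomb E c"
    using T unfolding diagonal_op_def by (simp add: lincomb_eq_iff[OF E(1)])
  moreover have "lincomb E (\<lambda>e. 1 / m e * c e) \<in> V"
    using lincomb_in_span E(2) by blast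
  ultimately show "the_inv_into V T (lincomb E c) = lincomb E (\<lambda>e. 1 / m e * c e)"
    by (rule the_inv_into_f_eq)
qed

lemma commuting_self_adjoint_diagonalization:
  assumes "fin_dim_subspace V" "op_on V T1" "op_on V T2"
    and "\<forall>v\<in>V. \<forall>w\<in>V. inner (T1 v) w = inner v (T1 w)"
    and "\<forall>v\<in>V. \<forall>w\<in>V. inner (T2 v) w = inner v (T2 w)"
    and "\<forall>v\<in>V. T1 (T2 v) = T2 (T1 v)"
  obtains E where "finite_orthonormal E" "span E = V"
    "diagonal_op E (\<lambda>e. inner (T1 e) e) T1" "diagonal_op E (\<lambda>e. inner (T2 e) e) T2"
proof -
  obtain E where E: "finite_orthonormal E" "span E = V"
    and eigen: "\<forall>e\<in>E. \<exists>\<alpha> \<beta>. T1 e = \<alpha> *\<^sub>R e \<and> T2 e = \<beta> *\<^sub>R e"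
    using commuting_self_adjoint_eigenbasis[OF assms] by blast
  have eigen_inner: "T1 e = inner (T1 e) e *\<^sub>R e \<and> T2 e = inner (T2 e) e *\<^sub>R e" if e: "e \<in> E" for e
  proof -
    obtain \<alpha> \<beta> where "T1 e = \<alpha> *\<^sub>R e" "T2 e = \<beta> *\<^sub>R e"
      using bspec[OF eigen e] by metis
    moreover have "inner e e = 1"
      using E(1) e by (simp add: finite_orthonormal_def dot_square_norm)
    ultimately show ?thesis
      by simp
  qed
  have "lin_on V T1" "lin_on V T2"
    using assms(2,3) by (simp_all add: op_on_def)
  have "diagonal_op E (\<lambda>e. inner (T1 e) e) T1"
    using eigen_inner by (intro diagonal_op_eigenbasis[OF E \<open>lin_on V T1\<close>]) blast
  moreover have "diagonal_op E (\<lambda>e. inner (T2 e) e) T2"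
    using eigen_inner by (intro diagonal_op_eigenbasis[OF E \<open>lin_on V T2\<close>]) blast
  ultimately show ?thesis
    using that E by blast
qed

lemma self_adjoint_positive_definite_bij:
  assumes "fin_dim_subspace V" "op_on V T" "\<forall>v\<in>V. \<forall>w\<in>V. inner (T v) w = inner v (T w)"
    and "\<forall>v\<in>V. v \<noteq> 0 \<longrightarrow> 0 < inner (T v) v"
  shows "bij_betw T V V"
proof -
  have "\<forall>v\<in>V. T (T v) = T (T v)"
    by simp
  then obtain E where E: "finite_orthonormal E" "span E = V" "diagonal_op E (\<lambda>e. inner (T e) e) T"
    using commuting_self_adjoint_diagonalization[OF assms(1,2,2,3,3)] by blast
  have "inner (T e) e \<noteq> 0" if "e \<in> E" for e
  proof -
    have "e \<in> V"
      using E(2) that span_base by blast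
    moreover have "e \<noteq> 0"
      using E(1) that by (auto simp: finite_orthonormal_def)
    ultimately show ?thesis
      using assms(4) by fastforce
  qed
  then show ?thesis
    using bij_betw_diagonal_op[OF E] by blast
qed


section \<open>The scalar splitting estimate\<close>

lemma mult_exp_neg_le:
  fixes z c :: real
  assumes "0 \<le> z" "0 < c"
  shows "z * exp (- z / c) \<le> c"
proof -
  have "z / c \<le> exp (z / c)"
    using exp_ge_add_one_self[of "z / c"] by linarith
  then have "z / c * exp (- z / c) \<le> exp (z / c) * exp (- z / c)"
    by (rule mult_right_mono) simp
  also have "\<dots> = 1"
    by (simp flip: exp_add)
  finally show ?thesis
    using assms(2) by (simp add: field_simps)
qed

lemma power2_mult_exp_neg_le:
  fixes z c :: real
  assumes "0 \<le> z" "0 < c"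
  shows "z\<^sup>2 * exp (- z / c) \<le> 4 * c\<^sup>2"
proof -
  have "z\<^sup>2 * exp (- z / c) = (z * exp (- z / (2 * c)))\<^sup>2"
    by (simp add: power2_eq_square field_simps flip: exp_add)
  also have "\<dots> \<le> (2 * c)\<^sup>2"
    using mult_exp_neg_le[of z "2 * c"] assms by (intro power_mono) auto
  finally show ?thesis
    by (simp add: power_mult_distrib)
qed

lemma abs_power_diff_le:
  fixes a b M :: real
  assumes "0 \<le> a" "a \<le> M" "0 \<le> b" "b \<le> M"
  shows "\<bar>a ^ Suc k - b ^ Suc k\<bar> \<le> real (Suc k) * \<bar>a - b\<bar> * M ^ k"
proof (induction k)
  case 0
  show ?case
    by simp
next
  case (Suc k)
  have "\<bar>a ^ Suc (Suc k) - b ^ Suc (Suc k)\<bar> = \<bar>a * (a ^ Suc k - b ^ Suc k) + b ^ Suc k * (a - b)\<bar>"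
    by (simp add: algebra_simps)
  also have "\<dots> \<le> M * (real (Suc k) * \<bar>a - b\<bar> * M ^ k) + M ^ Suc k * \<bar>a - b\<bar>"
    using assms Suc by (intro order_trans[OF abs_triangle_ineq] add_mono)
      (auto simp: abs_mult intro!: mult_mono power_mono)
  also have "\<dots> = real (Suc (Suc k)) * \<bar>a - b\<bar> * M ^ Suc k"
    by (simp add: algebra_simps)
  finally show ?case .
qed

lemma resolvent_factor_le_exp:
  fixes s d :: real
  assumes "0 \<le> s" "0 \<le> d"
  shows "0 \<le> (1 + d) / (1 + s + d)" "(1 + d) / (1 + s + d) \<le> exp (- (s / (1 + s + d)))"
proof -
  have "(1 + d) / (1 + s + d) = 1 - s / (1 + s + d)"
    using assms by (simp add: field_simps)
  then show "(1 + d) / (1 + s + d) \<le> exp (- (s / (1 + s + d)))"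
    using exp_ge_add_one_self[of "- (s / (1 + s + d))"] by simp
qed (use assms in simp)

lemma splitting_scalar_error_large:
  fixes s d :: real
  assumes "1 \<le> s" "0 \<le> d"
  shows "real (Suc m) * \<bar>exp (- (real (Suc m) * s)) - ((1 + d) / (1 + s + d)) ^ m / (1 + s + d)\<bar> \<le> 3"
proof -
  define n where "n = real (Suc m)"
  define q where "q = 1 / (1 + s + d)"
  define r where "r = (1 + d) / (1 + s + d)"
  have q: "0 < q" "q \<le> 1" "q \<le> s / (1 + s + d)"
    unfolding q_def using assms by (auto simp: divide_right_mono)
  have "0 \<le> s"
    using assms(1) by simp
  have "exp (- (s / (1 + s + d))) \<le> exp (- q)"
    using q(3) by simp
  then have r: "0 \<le> r" "r \<le> exp (- q)"
    unfolding r_def using resolvent_factor_le_exp[OF \<open>0 \<le> s\<close> assms(2)] by (blast intro: order_trans)+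
  have "n * 1 \<le> n * s"
    using assms(1) by (intro mult_left_mono) (auto simp: n_def)
  then have "exp (- (n * s)) \<le> exp (- n)"
    by simp
  then have "n * exp (- (n * s)) \<le> n * exp (- n)"
    by (rule mult_left_mono) (simp add: n_def)
  also have "\<dots> \<le> 1"
    using mult_exp_neg_le[of n 1] by (simp add: n_def)
  finally have exp_part: "n * exp (- (n * s)) \<le> 1" .
  have "r ^ m \<le> exp (- q) ^ m"
    using r by (simp add: power_mono)
  also have "\<dots> = exp (- (real m * q))"
    by (simp flip: exp_of_nat_mult)
  finally have "n * (r ^ m * q) \<le> n * (exp (- (real m * q)) * q)"
    using q by (simp add: n_def mult_right_mono)
  also have "\<dots> = q * exp (- (real m * q)) + (real m * q) * exp (- (real m * q))"
    unfolding n_def by (simp add: algebra_simps)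
  also have "\<dots> \<le> 1 + 1"
  proof (rule add_mono)
    show "q * exp (- (real m * q)) \<le> 1"
      using q by (intro mult_le_one) auto
    show "real m * q * exp (- (real m * q)) \<le> 1"
      using mult_exp_neg_le[of "real m * q" 1] q by simp
  qed
  finally have split_part: "n * (r ^ m * q) \<le> 2"
    by simp
  have "0 \<le> r ^ m * q"
    using q r by simp
  then have "\<bar>exp (- (n * s)) - r ^ m * q\<bar> \<le> exp (- (n * s)) + r ^ m * q"
    by (simp add: abs_le_iff)
  then have "n * \<bar>exp (- (n * s)) - r ^ m * q\<bar> \<le> n * exp (- (n * s)) + n * (r ^ m * q)"
    by (simp add: n_def mult_left_mono flip: distrib_left)
  then show ?thesis
    using exp_part split_part by (simp add: n_def q_def r_def)
qed

lemma exp_neg_resolvent_approx: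
  fixes s d :: real
  assumes "0 \<le> s" "s < 1" "0 \<le> d" "d \<le> s\<^sup>2"
  shows "\<bar>exp (- s) - 1 / (1 + s + d)\<bar> \<le> s\<^sup>2"
    and "\<bar>exp (- s) - (1 + d) / (1 + s + d)\<bar> \<le> 2 * s\<^sup>2"
proof -
  define p where "p = 1 + s + d"
  have "1 \<le> p"
    unfolding p_def using assms by simp
  have upper: "exp (- s) * (1 + s) \<le> 1"
    using exp_ge_add_one_self[of s] by (simp add: exp_minus field_simps)
  have lower: "1 - s \<le> exp (- s)"
    using exp_ge_add_one_self[of "- s"] by simp
  have "s * d \<le> d"
    using assms by (simp add: mult_left_le_one_le)
  then have "s * d \<le> s\<^sup>2"
    using assms(4) by linarith
  have "exp (- s) * p - 1 \<le> d"
    using upper exp_le_one_iff[of "- s"] assms unfolding p_def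
    by (smt (verit) mult_left_le_one_le distrib_left exp_gt_zero)
  moreover have "(1 - s) * p - 1 \<le> exp (- s) * p - 1"
    using lower \<open>1 \<le> p\<close> by (simp add: mult_right_mono)
  moreover have "(1 - s) * p - 1 = d - s\<^sup>2 - s * d"
    unfolding p_def by (simp add: algebra_simps power2_eq_square)
  ultimately have bounds: "- s\<^sup>2 - s * d \<le> exp (- s) * p - 1 - d" "exp (- s) * p - 1 - d \<le> 0"
    by linarith+
  have "\<bar>exp (- s) - 1 / p\<bar> = \<bar>exp (- s) * p - 1\<bar> / p"
    using \<open>1 \<le> p\<close> by (simp add: field_simps abs_div)
  also have "\<dots> \<le> \<bar>exp (- s) * p - 1\<bar>"
    using \<open>1 \<le> p\<close> by (simp add: divide_le_eq mult_le_cancel_left1)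
  also have "\<dots> \<le> s\<^sup>2"
    using bounds assms \<open>s * d \<le> d\<close> by (simp add: abs_le_iff)
  finally show "\<bar>exp (- s) - 1 / (1 + s + d)\<bar> \<le> s\<^sup>2"
    by (simp add: p_def)
  have "\<bar>exp (- s) - (1 + d) / p\<bar> = \<bar>exp (- s) * p - 1 - d\<bar> / p"
    using \<open>1 \<le> p\<close> by (simp add: field_simps abs_div)
  also have "\<dots> \<le> \<bar>exp (- s) * p - 1 - d\<bar>"
    using \<open>1 \<le> p\<close> by (simp add: divide_le_eq mult_le_cancel_left1)
  also have "\<dots> \<le> 2 * s\<^sup>2"
    using bounds \<open>s * d \<le> s\<^sup>2\<close> by (simp add: abs_le_iff)
  finally show "\<bar>exp (- s) - (1 + d) / (1 + s + d)\<bar> \<le> 2 * s\<^sup>2"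
    by (simp add: p_def)
qed

lemma linear_exp_decay_le:
  fixes s :: real
  assumes "0 \<le> s" "s \<le> 1"
  shows "real (Suc m) * s\<^sup>2 * exp (- (real m * s) / 3) \<le> 4"
proof -
  have "real (Suc m) * s\<^sup>2 * exp (- (real m * s) / 3)
      = s * (real m * s * exp (- (real m * s) / 3)) + s\<^sup>2 * exp (- (real m * s) / 3)"
    by (simp add: algebra_simps power2_eq_square)
  also have "\<dots> \<le> 1 * 3 + 1 * 1"
    using assms mult_exp_neg_le[of "real m * s" 3]
    by (intro add_mono mult_mono) (auto simp: power_le_one)
  finally show ?thesis
    by simp
qed

lemma quadratic_exp_decay_le:
  fixes s :: real
  assumes "0 \<le> s" "s \<le> 1"
  shows "(real (Suc k) * s)\<^sup>2 * exp (- (real k * s) / 3) \<le> 74"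
proof -
  have "(real (Suc k) * s)\<^sup>2 = (real k * s + s)\<^sup>2"
    by (simp add: algebra_simps)
  also have "\<dots> \<le> 2 * (real k * s)\<^sup>2 + 2 * s\<^sup>2"
    using zero_le_power2[of "real k * s - s"] by (simp add: power2_eq_square algebra_simps)
  also have "\<dots> \<le> 2 * (real k * s)\<^sup>2 + 2"
    using assms by (simp add: power_le_one)
  finally have "(real (Suc k) * s)\<^sup>2 * exp (- (real k * s) / 3)
      \<le> (2 * (real k * s)\<^sup>2 + 2) * exp (- (real k * s) / 3)"
    by (rule mult_right_mono) simp
  also have "\<dots> = 2 * ((real k * s)\<^sup>2 * exp (- (real k * s) / 3)) + 2 * exp (- (real k * s) / 3)"
    by (simp add: algebra_simps)
  also have "\<dots> \<le> 2 * (4 * 3\<^sup>2) + 2 * 1"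
    using assms power2_mult_exp_neg_le[of "real k * s" 3] by (intro add_mono mult_left_mono) auto
  finally show ?thesis
    by simp
qed

lemma power_diff_decay_le:
  fixes \<alpha> r s q :: real
  assumes "0 \<le> \<alpha>" "\<alpha> \<le> exp (- s / 3)" "0 \<le> r" "r \<le> exp (- s / 3)" "\<bar>\<alpha> - r\<bar> \<le> 2 * s\<^sup>2"
    and "0 < q" "q \<le> 1" "0 \<le> s" "s \<le> 1"
  shows "real (Suc m) * \<bar>q * (\<alpha> ^ m - r ^ m)\<bar> \<le> 296"
proof (cases m)
  case 0
  then show ?thesis
    by simp
next
  case (Suc k)
  define M where "M = exp (- s / 3)"
  have M_power: "M ^ k = exp (- (real k * s) / 3)"
    unfolding M_def by (simp flip: exp_of_nat_mult)
  have "\<bar>q * (\<alpha> ^ m - r ^ m)\<bar> \<le> \<bar>\<alpha> ^ Suc k - r ^ Suc k\<bar>"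
    using assms(6,7) Suc by (simp add: abs_mult mult_left_le_one_le)
  also have "\<dots> \<le> real (Suc k) * \<bar>\<alpha> - r\<bar> * M ^ k"
    using assms(1-4) unfolding M_def by (rule abs_power_diff_le)
  also have "\<dots> \<le> real (Suc k) * (2 * s\<^sup>2) * M ^ k"
    using assms(5) by (intro mult_right_mono mult_left_mono) (auto simp: M_def)
  finally have "real (Suc m) * \<bar>q * (\<alpha> ^ m - r ^ m)\<bar> \<le> (2 * real (Suc k)) * (real (Suc k) * (2 * s\<^sup>2) * M ^ k)"
    using Suc by (intro order_trans[OF mult_left_mono mult_right_mono]) (auto simp: M_def)
  also have "\<dots> = 4 * ((real (Suc k) * s)\<^sup>2 * exp (- (real k * s) / 3))"
    unfolding M_power by (simp add: algebra_simps power2_eq_square)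
  also have "\<dots> \<le> 4 * 74"
    using quadratic_exp_decay_le[of s k] assms by simp
  finally show ?thesis
    by simp
qed

lemma splitting_scalar_error_small:
  fixes s d :: real
  assumes "0 \<le> s" "s < 1" "0 \<le> d" "d \<le> s\<^sup>2"
  shows "real (Suc m) * \<bar>exp (- (real (Suc m) * s)) - ((1 + d) / (1 + s + d)) ^ m / (1 + s + d)\<bar> \<le> 300"
proof -
  define n where "n = real (Suc m)"
  define q where "q = 1 / (1 + s + d)"
  define r where "r = (1 + d) / (1 + s + d)"
  define \<alpha> where "\<alpha> = exp (- s)"
  define M where "M = exp (- s / 3)"
  have "s * s \<le> s"
    using assms by (simp add: mult_left_le_one_le)
  then have "d \<le> 1"
    using assms by (simp add: power2_eq_square)
  then have q: "0 < q" "q \<le> 1" "s / 3 \<le> s * q"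
    unfolding q_def using assms \<open>s * s \<le> s\<close> mult_left_le_one_le[of s d] by (auto simp: field_simps)
  have "exp (- (s / (1 + s + d))) \<le> M"
    using q(3) unfolding M_def q_def by simp
  then have r: "0 \<le> r" "r \<le> M"
    unfolding r_def using resolvent_factor_le_exp[OF assms(1,3)] by (blast intro: order_trans)+
  have \<alpha>: "0 \<le> \<alpha>" "\<alpha> \<le> M"
    unfolding \<alpha>_def M_def using assms by auto
  have M_power: "M ^ k = exp (- (real k * s) / 3)" for k
    unfolding M_def by (simp flip: exp_of_nat_mult)
  have "exp (- (n * s)) - r ^ m * q = \<alpha> ^ m * (\<alpha> - q) + q * (\<alpha> ^ m - r ^ m)"
    unfolding n_def \<alpha>_def by (simp add: algebra_simps flip: exp_of_nat_mult exp_add)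
  then have "n * \<bar>exp (- (n * s)) - r ^ m * q\<bar> \<le> n * \<bar>\<alpha> ^ m * (\<alpha> - q)\<bar> + n * \<bar>q * (\<alpha> ^ m - r ^ m)\<bar>"
    by (simp add: n_def mult_left_mono abs_triangle_ineq flip: distrib_left)
  also have "\<dots> \<le> 4 + 296"
  proof (rule add_mono)
    have "\<bar>\<alpha> ^ m * (\<alpha> - q)\<bar> \<le> M ^ m * s\<^sup>2"
      using \<alpha> exp_neg_resolvent_approx(1)[OF assms] unfolding abs_mult \<alpha>_def q_def
      by (intro mult_mono) (auto intro: power_mono simp: M_def)
    then have "n * \<bar>\<alpha> ^ m * (\<alpha> - q)\<bar> \<le> n * (M ^ m * s\<^sup>2)"
      by (simp add: n_def mult_left_mono)
    also have "\<dots> \<le> 4"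
      using linear_exp_decay_le[of s m] assms unfolding n_def M_power by (simp add: mult_ac)
    finally show "n * \<bar>\<alpha> ^ m * (\<alpha> - q)\<bar> \<le> 4" .
    show "n * \<bar>q * (\<alpha> ^ m - r ^ m)\<bar> \<le> 296"
      using power_diff_decay_le[where \<alpha> = \<alpha> and r = r and s = s and q = q and m = m] \<alpha> r q exp_neg_resolvent_approx(2)[OF assms] assms
      unfolding n_def \<alpha>_def r_def M_def by simp
  qed
  finally show ?thesis
    by (simp add: n_def q_def r_def)
qed

lemma splitting_scalar_error:
  fixes x y :: real
  assumes "0 \<le> x" "0 \<le> y" "1 \<le> n"
  shows "\<bar>exp (- (real n * (x + y))) - ((1 + x * y) / ((1 + x) * (1 + y))) ^ (n - 1) / ((1 + x) * (1 + y))\<bar>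
    \<le> 300 / real n"
proof -
  define s where "s = x + y"
  define d where "d = x * y"
  have "0 \<le> s" "0 \<le> d"
    unfolding s_def d_def using assms by simp_all
  moreover have "d \<le> s\<^sup>2"
    unfolding s_def d_def using assms by (simp add: power2_eq_square algebra_simps)
  moreover obtain m where n: "n = Suc m"
    using assms(3) by (cases n) auto
  ultimately have "real n * \<bar>exp (- (real (Suc m) * s)) - ((1 + d) / (1 + s + d)) ^ m / (1 + s + d)\<bar> \<le> 300"
    using splitting_scalar_error_large[of s d m] splitting_scalar_error_small[of s d m]
    by (cases "1 \<le> s") auto
  moreover have "(1 + x) * (1 + y) = 1 + s + d"
    unfolding s_def d_def by (simp add: algebra_simps)
  ultimately show ?thesis
    using n by (simp add: s_def d_def field_simps)
qed

lemma splitting_multiplier_error: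
  fixes \<tau> a b :: real
  assumes "0 < \<tau>" "0 \<le> a" "0 \<le> b" "1 \<le> n"
  shows "\<bar>exp (- (real n * \<tau> * (a + b)))
      - (1 / (1 + \<tau> * b) * (1 / (1 + \<tau> * a) * (1 + \<tau>\<^sup>2 * (a * b)))) ^ (n - 1) * (1 / (1 + \<tau> * b) * (1 / (1 + \<tau> * a)))\<bar>
    \<le> 300 / real n"
proof -
  define x where "x = \<tau> * a"
  define y where "y = \<tau> * b"
  have "0 \<le> x" "0 \<le> y"
    unfolding x_def y_def using assms by simp_all
  have step: "1 / (1 + \<tau> * b) * (1 / (1 + \<tau> * a) * (1 + \<tau>\<^sup>2 * (a * b))) = (1 + x * y) / ((1 + x) * (1 + y))"
    unfolding x_def y_def by (simp add: power2_eq_square mult_ac)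
  have resolvents: "1 / (1 + \<tau> * b) * (1 / (1 + \<tau> * a)) = 1 / ((1 + x) * (1 + y))"
    unfolding x_def y_def by simp
  have time: "real n * \<tau> * (a + b) = real n * (x + y)"
    unfolding x_def y_def by (simp add: algebra_simps)
  have "exp (- (real n * \<tau> * (a + b)))
      - (1 / (1 + \<tau> * b) * (1 / (1 + \<tau> * a) * (1 + \<tau>\<^sup>2 * (a * b)))) ^ (n - 1) * (1 / (1 + \<tau> * b) * (1 / (1 + \<tau> * a)))
    = exp (- (real n * (x + y))) - ((1 + x * y) / ((1 + x) * (1 + y))) ^ (n - 1) / ((1 + x) * (1 + y))"
    unfolding step resolvents time by simp
  then show ?thesis
    using splitting_scalar_error[OF \<open>0 \<le> x\<close> \<open>0 \<le> y\<close> assms(4)] by simp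
qed

lemma splitting_error_bound:
  fixes V :: "'a::real_inner set" and T T1 T2 :: "'a \<Rightarrow> 'a"
  assumes V: "fin_dim_subspace V" and T: "op_on V T1" "op_on V T2" "\<forall>v\<in>V. T v = T1 v + T2 v"
    and nonneg: "\<forall>v\<in>V. 0 \<le> inner (T1 v) v \<and> 0 \<le> inner (T2 v) v"
    and self_adjoint: "\<forall>v\<in>V. \<forall>w\<in>V. inner (T1 v) w = inner v (T1 w) \<and> inner (T2 v) w = inner v (T2 w)"
    and commute: "\<forall>v\<in>V. T1 (T2 v) = T2 (T1 v)"
    and "0 < \<tau>" "1 \<le> n" "v \<in> V"
  defines "R1 \<equiv> the_inv_into V (\<lambda>v. v + \<tau> *\<^sub>R T1 v)"
    and "R2 \<equiv> the_inv_into V (\<lambda>v. v + \<tau> *\<^sub>R T2 v)"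
  shows "norm (exp_op (real n * \<tau>) T v - ((\<lambda>w. R2 (R1 (w + \<tau>\<^sup>2 *\<^sub>R T1 (T2 w)))) ^^ (n - 1)) (R2 (R1 v)))
           \<le> 300 / real n * norm v"
proof -
  obtain E where E: "finite_orthonormal E" "span E = V"
    and T1: "diagonal_op E (\<lambda>e. inner (T1 e) e) T1" and T2: "diagonal_op E (\<lambda>e. inner (T2 e) e) T2"
    using commuting_self_adjoint_diagonalization[OF V T(1,2)] self_adjoint commute by blast
  define a where "a e = inner (T1 e) e" for e
  define b where "b e = inner (T2 e) e" for e
  have ab: "0 \<le> a e" "0 \<le> b e" if "e \<in> E" for e
    using nonneg that E(2) span_base unfolding a_def b_def by blast+
  then have "0 \<le> \<tau> * a e" "0 \<le> \<tau> * b e" if "e \<in> E" for e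
    using that \<open>0 < \<tau>\<close> by simp_all
  then have nonzero: "\<forall>e\<in>E. 1 + \<tau> * a e \<noteq> 0" "\<forall>e\<in>E. 1 + \<tau> * b e \<noteq> 0"
    by (smt (verit))+
  have R1: "diagonal_op E (\<lambda>e. 1 / (1 + \<tau> * a e)) R1"
    using nonzero(1) unfolding R1_def a_def
    by (intro diagonal_op_the_inv_into[OF E] diagonal_op_add[OF diagonal_op_id] diagonal_op_scaleR T1)
  have R2: "diagonal_op E (\<lambda>e. 1 / (1 + \<tau> * b e)) R2"
    using nonzero(2) unfolding R2_def b_def
    by (intro diagonal_op_the_inv_into[OF E] diagonal_op_add[OF diagonal_op_id] diagonal_op_scaleR T2)
  have T: "diagonal_op E (\<lambda>e. a e + b e) T"
    using T(3) E(2) unfolding a_def b_def by (intro diagonal_op_cong[OF _ diagonal_op_add[OF T1 T2]]) simp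
  define \<sigma> where "\<sigma> e = 1 / (1 + \<tau> * b e) * (1 / (1 + \<tau> * a e) * (1 + \<tau>\<^sup>2 * (a e * b e)))" for e
  have \<sigma>: "diagonal_op E \<sigma> (\<lambda>w. R2 (R1 (w + \<tau>\<^sup>2 *\<^sub>R T1 (T2 w))))"
    unfolding \<sigma>_def
    using diagonal_op_comp[OF R2 diagonal_op_comp[OF R1 diagonal_op_add[OF diagonal_op_id
          diagonal_op_scaleR[OF diagonal_op_comp[OF T1 T2]]]]]
    by (simp add: a_def b_def)
  define \<mu> where "\<mu> e = exp (- (real n * \<tau> * (a e + b e)))
    - \<sigma> e ^ (n - 1) * (1 / (1 + \<tau> * b e) * (1 / (1 + \<tau> * a e)))" for e
  have "diagonal_op E \<mu>
      (\<lambda>v. exp_op (real n * \<tau>) T v - ((\<lambda>w. R2 (R1 (w + \<tau>\<^sup>2 *\<^sub>R T1 (T2 w)))) ^^ (n - 1)) (R2 (R1 v)))"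
    unfolding \<mu>_def
    by (intro diagonal_op_diff diagonal_op_exp_op[OF T] diagonal_op_comp diagonal_op_funpow R1 R2 \<sigma>)
  moreover have "\<bar>\<mu> e\<bar> \<le> 300 / real n" if "e \<in> E" for e
    unfolding \<mu>_def \<sigma>_def using splitting_multiplier_error[OF \<open>0 < \<tau>\<close> ab[OF that] \<open>1 \<le> n\<close>] .
  ultimately show ?thesis
    using \<open>v \<in> V\<close> E(2) norm_diagonal_op_le[OF E(1), of \<mu> _ "300 / real n" v] by simp
qed


section \<open>Uniform boundedness of the projections\<close>

lemma cond_A_resolvent_estimate:
  assumes "cond_A D A D1 A1 D2 A2"
  obtains C where "0 \<le> C" "\<And>s g. 0 < s \<Longrightarrow> \<exists>u\<in>D. A u + s *\<^sub>R u = g \<and> norm u \<le> C / s * norm g"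
proof -
  obtain \<phi> C where "0 < \<phi>" "\<phi> < pi / 2"
    and sector: "\<forall>z\<in>sector \<phi>. bij_betw (cplx_shift A z) (D \<times> D) UNIV \<and>
      (\<forall>p\<in>D \<times> D. norm p \<le> C / cmod z * norm (cplx_shift A z p))"
    using assms unfolding cond_A_def by blast
  have "\<exists>u\<in>D. A u + s *\<^sub>R u = g \<and> norm u \<le> \<bar>C\<bar> / s * norm g" if "0 < s" for s g
  proof -
    define z where "z = complex_of_real (- s)"
    have "z \<in> sector \<phi>"
      unfolding z_def sector_def using that \<open>0 < \<phi>\<close> \<open>\<phi> < pi / 2\<close> Arg_of_real[of "- s"] by simp
    then obtain p where p: "p \<in> D \<times> D" "cplx_shift A z p = (g, 0)"
      using sector unfolding bij_betw_def by (metis UNIV_I imageE)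
    then have "A (fst p) + s *\<^sub>R fst p = g"
      unfolding cplx_shift_def z_def by (auto simp: prod_eq_iff)
    moreover have "norm (fst p) \<le> \<bar>C\<bar> / s * norm g"
    proof -
      have "norm (fst p) \<le> norm p"
        using norm_fst_le[of "fst p" "snd p"] by simp
      also have "norm p \<le> C / s * norm g"
        using sector \<open>z \<in> sector \<phi>\<close> p that by (fastforce simp: z_def)
      also have "\<dots> \<le> \<bar>C\<bar> / s * norm g"
        using that by (intro mult_right_mono divide_right_mono) auto
      finally show ?thesis .
    qed
    ultimately show ?thesis
      using p(1) by auto
  qed
  then show ?thesis
    using that[of "\<bar>C\<bar>"] by simp
qed

lemma resolvent_solution_bounds:
  fixes A :: "'a::real_normed_vector \<Rightarrow> 'a"
  assumes "0 < s" "A u + s *\<^sub>R u = g" "norm u \<le> C / s * norm g"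
  shows "norm (s *\<^sub>R u) \<le> C * norm g" "norm (A u) \<le> (1 + C) * norm g"
proof -
  have "norm (s *\<^sub>R u) = s * norm u"
    using assms(1) by simp
  also have "\<dots> \<le> s * (C / s * norm g)"
    using assms(1,3) by (simp only: mult_le_cancel_left_pos)
  also have "\<dots> = C * norm g"
    using assms(1) by simp
  finally show su: "norm (s *\<^sub>R u) \<le> C * norm g" .
  have "A u = g - s *\<^sub>R u"
    using assms(2) by (simp add: eq_diff_eq)
  then have "norm (A u) \<le> norm g + norm (s *\<^sub>R u)"
    using norm_triangle_ineq4[of g "s *\<^sub>R u"] by simp
  then show "norm (A u) \<le> (1 + C) * norm g"
    using su by (simp add: algebra_simps)
qed

lemma norm_power2_le_inverse_image:
  assumes T: "bij_betw T V V" "\<forall>v\<in>V. \<forall>w\<in>V. inner (T v) w = inner v (T w)" and "x \<in> V"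
  shows "(norm x)\<^sup>2 \<le> norm (the_inv_into V T x) * norm (T x)"
proof -
  have "the_inv_into V T x \<in> V" "T (the_inv_into V T x) = x"
    using T(1) \<open>x \<in> V\<close> by (auto simp: bij_betw_def the_inv_into_into f_the_inv_into_f)
  then have "(norm x)\<^sup>2 = inner (the_inv_into V T x) (T x)"
    using T(2) \<open>x \<in> V\<close> by (metis power2_norm_eq_inner)
  also have "\<dots> \<le> norm (the_inv_into V T x) * norm (T x)"
    by (rule norm_cauchy_schwarz)
  finally show ?thesis .
qed

lemma norm_projection_range_power2_le:
  assumes "u \<in> D" "inj_on A D" "P (A u) \<in> V"
    and T: "bij_betw T V V" "\<forall>v\<in>V. \<forall>w\<in>V. inner (T v) w = inner v (T w)"
    and inverse_approx: "norm (the_inv_into D A (A u) - the_inv_into V T (P (A u))) \<le> Cg * h\<^sup>2 * norm (A u)"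
    and inverse_estimate: "norm (T (P (A u))) \<le> Ce / h\<^sup>2 * norm (A u)"
  shows "(norm (P (A u)))\<^sup>2 \<le> (norm u + \<bar>Cg\<bar> * h\<^sup>2 * norm (A u)) * (\<bar>Ce\<bar> / h\<^sup>2 * norm (A u))"
proof -
  define y where "y = the_inv_into V T (P (A u))"
  have "norm (u - y) \<le> \<bar>Cg\<bar> * h\<^sup>2 * norm (A u)"
    using inverse_approx the_inv_into_f_f[OF assms(2,1)] unfolding y_def
    by (smt (verit, best) abs_ge_self mult_right_mono norm_ge_zero zero_le_power2 mult_nonneg_nonneg)
  then have "norm y \<le> norm u + \<bar>Cg\<bar> * h\<^sup>2 * norm (A u)"
    using norm_triangle_ineq2[of y u] by (simp add: norm_minus_commute)
  moreover have "norm (T (P (A u))) \<le> \<bar>Ce\<bar> / h\<^sup>2 * norm (A u)"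
    using inverse_estimate by (smt (verit) abs_ge_self divide_right_mono mult_right_mono norm_ge_zero zero_le_power2)
  moreover have "(norm (P (A u)))\<^sup>2 \<le> norm y * norm (T (P (A u)))"
    unfolding y_def by (rule norm_power2_le_inverse_image[OF T assms(3)])
  ultimately show ?thesis
    by (meson mult_mono norm_ge_zero order_trans)
qed

lemma norm_projection_le:
  assumes "0 < h" "0 \<le> Cs"
    and resolvent: "\<exists>u\<in>D. A u + (1 / h\<^sup>2) *\<^sub>R u = g \<and> norm u \<le> Cs * h\<^sup>2 * norm g"
    and A: "subspace D" "lin_on D A" "inj_on A D"
    and P: "linear P" "\<forall>f. P f \<in> V"
    and approx: "\<forall>v\<in>D. norm (v - P v) \<le> Ca * h\<^sup>2 * norm (A v)"
    and inverse_approx: "\<forall>f. norm (the_inv_into D A f - the_inv_into V T (P f)) \<le> Cg * h\<^sup>2 * norm f"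
    and inverse_estimate: "\<forall>f. norm (T (P f)) \<le> Ce / h\<^sup>2 * norm f"
    and T: "bij_betw T V V" "\<forall>v\<in>V. \<forall>w\<in>V. inner (T v) w = inner v (T w)"
  shows "norm (P g) \<le> (Cs + \<bar>Ca\<bar> * (1 + Cs) + sqrt ((Cs + \<bar>Cg\<bar> * (1 + Cs)) * (\<bar>Ce\<bar> * (1 + Cs)))) * norm g"
proof -
  define K1 where "K1 = Cs + \<bar>Cg\<bar> * (1 + Cs)"
  define K2 where "K2 = \<bar>Ce\<bar> * (1 + Cs)"
  have "0 \<le> K1" "0 \<le> K2"
    unfolding K1_def K2_def using \<open>0 \<le> Cs\<close> by simp_all
  define s where "s = 1 / h\<^sup>2"
  have "0 < s" "s * h\<^sup>2 = 1"
    using \<open>0 < h\<close> by (simp_all add: s_def)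
  obtain u where u: "u \<in> D" "A u + s *\<^sub>R u = g" "norm u \<le> Cs * h\<^sup>2 * norm g"
    using resolvent unfolding s_def by blast
  then have "norm u \<le> Cs / s * norm g"
    by (simp add: s_def)
  note u_bounds = resolvent_solution_bounds[where A = A and u = u, OF \<open>0 < s\<close> u(2) this]
  have "s *\<^sub>R u \<in> D" "A (s *\<^sub>R u) = s *\<^sub>R A u"
    using A u(1) by (auto simp: lin_on_def subspace_scale)
  then have "norm (s *\<^sub>R u - P (s *\<^sub>R u)) \<le> Ca * h\<^sup>2 * norm (s *\<^sub>R A u)"
    using approx by metis
  also have "\<dots> = Ca * norm (A u)"
    using \<open>0 < s\<close> \<open>s * h\<^sup>2 = 1\<close> by (simp add: algebra_simps)
  also have "\<dots> \<le> \<bar>Ca\<bar> * ((1 + Cs) * norm g)"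
    using mult_right_mono[OF abs_ge_self[of Ca] norm_ge_zero[of "A u"]]
      mult_left_mono[OF u_bounds(2) abs_ge_zero[of Ca]] by linarith
  finally have smooth: "norm (P (s *\<^sub>R u)) \<le> Cs * norm g + \<bar>Ca\<bar> * ((1 + Cs) * norm g)"
    using u_bounds(1) norm_triangle_sub[of "P (s *\<^sub>R u)" "s *\<^sub>R u"] by (simp add: norm_minus_commute)
  have "(norm (P (A u)))\<^sup>2 \<le> (norm u + \<bar>Cg\<bar> * h\<^sup>2 * norm (A u)) * (\<bar>Ce\<bar> / h\<^sup>2 * norm (A u))"
    using u(1) A(3) P(2) T inverse_approx inverse_estimate by (intro norm_projection_range_power2_le) auto
  also have "\<dots> \<le> (K1 * h\<^sup>2 * norm g) * (K2 / h\<^sup>2 * norm g)"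
  proof (rule mult_mono)
    show "norm u + \<bar>Cg\<bar> * h\<^sup>2 * norm (A u) \<le> K1 * h\<^sup>2 * norm g"
      using u(3) mult_left_mono[OF u_bounds(2), of "\<bar>Cg\<bar> * h\<^sup>2"] unfolding K1_def by (simp add: algebra_simps)
    show "\<bar>Ce\<bar> / h\<^sup>2 * norm (A u) \<le> K2 / h\<^sup>2 * norm g"
      using mult_left_mono[OF u_bounds(2), of "\<bar>Ce\<bar> / h\<^sup>2"] unfolding K2_def by (simp add: algebra_simps)
  qed (use \<open>0 \<le> K1\<close> in auto)
  also have "\<dots> = (sqrt (K1 * K2) * norm g)\<^sup>2"
    using \<open>0 < h\<close> \<open>0 \<le> K1\<close> \<open>0 \<le> K2\<close> by (simp add: power_mult_distrib power2_eq_square)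
  finally have "(norm (P (A u)))\<^sup>2 \<le> (sqrt (K1 * K2) * norm g)\<^sup>2" .
  moreover have "0 \<le> sqrt (K1 * K2) * norm g"
    using \<open>0 \<le> K1\<close> \<open>0 \<le> K2\<close> by simp
  ultimately have rough: "norm (P (A u)) \<le> sqrt (K1 * K2) * norm g"
    by (rule power2_le_imp_le)
  have "P g = P (s *\<^sub>R u) + P (A u)"
    using linear_add[OF P(1), of "s *\<^sub>R u" "A u"] u(2) by (simp add: add.commute)
  then have "norm (P g) \<le> norm (P (s *\<^sub>R u)) + norm (P (A u))"
    by (simp add: norm_triangle_ineq)
  then have "norm (P g) \<le> Cs * norm g + \<bar>Ca\<bar> * ((1 + Cs) * norm g) + sqrt (K1 * K2) * norm g"
    using smooth rough by linarith
  then show ?thesis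
    unfolding K1_def K2_def by (simp add: algebra_simps)
qed

lemma uniformly_bounded_projections:
  assumes condA: "cond_A D A D1 A1 D2 A2" and "I \<subseteq> {0<..}"
    and P: "\<forall>h\<in>I. linear (P h) \<and> (\<forall>f. P h f \<in> V h)"
    and approx: "\<exists>C. \<forall>h\<in>I. \<forall>v\<in>D. norm (v - P h v) \<le> C * h\<^sup>2 * norm (A v)"
    and inverse_approx:
      "\<exists>C. \<forall>h\<in>I. \<forall>f. norm (the_inv_into D A f - the_inv_into (V h) (T h) (P h f)) \<le> C * h\<^sup>2 * norm f"
    and inverse_estimate: "\<exists>C. \<forall>h\<in>I. \<forall>f. norm (T h (P h f)) \<le> C / h\<^sup>2 * norm f"
    and T: "\<forall>h\<in>I. bij_betw (T h) (V h) (V h)"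
      "\<forall>h\<in>I. \<forall>v\<in>V h. \<forall>w\<in>V h. inner (T h v) w = inner v (T h w)"
  shows "\<exists>C. \<forall>h\<in>I. \<forall>f. norm (P h f) \<le> C * norm f"
proof -
  obtain Cs where "0 \<le> Cs" and resolvent: "\<And>s g. 0 < s \<Longrightarrow> \<exists>u\<in>D. A u + s *\<^sub>R u = g \<and> norm u \<le> Cs / s * norm g"
    using cond_A_resolvent_estimate[OF condA] by blast
  obtain Ca Cg Ce where Ca: "\<forall>h\<in>I. \<forall>v\<in>D. norm (v - P h v) \<le> Ca * h\<^sup>2 * norm (A v)"
    and Cg: "\<forall>h\<in>I. \<forall>f. norm (the_inv_into D A f - the_inv_into (V h) (T h) (P h f)) \<le> Cg * h\<^sup>2 * norm f"
    and Ce: "\<forall>h\<in>I. \<forall>f. norm (T h (P h f)) \<le> Ce / h\<^sup>2 * norm f"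
    using approx inverse_approx inverse_estimate by blast
  have A: "subspace D" "lin_on D A" "inj_on A D"
    using condA by (auto simp: cond_A_def bij_betw_def)
  have "norm (P h f) \<le> (Cs + \<bar>Ca\<bar> * (1 + Cs) + sqrt ((Cs + \<bar>Cg\<bar> * (1 + Cs)) * (\<bar>Ce\<bar> * (1 + Cs)))) * norm f"
    if "h \<in> I" for h f
  proof (rule norm_projection_le[where V = "V h" and T = "T h"])
    show "0 < h"
      using that \<open>I \<subseteq> {0<..}\<close> by auto
    then show "\<exists>u\<in>D. A u + (1 / h\<^sup>2) *\<^sub>R u = f \<and> norm u \<le> Cs * h\<^sup>2 * norm f"
      using resolvent[of "1 / h\<^sup>2" f] by simp
  qed (use that \<open>0 \<le> Cs\<close> A P Ca Cg Ce T in auto)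
  then show ?thesis
    by blast
qed

lemma coercive_self_adjoint_bij:
  assumes "fin_dim_subspace V" "op_on V T" "\<forall>v\<in>V. \<forall>w\<in>V. inner (T v) w = inner v (T w)"
    and "inner_product_on V ip" "0 < c" "\<forall>v\<in>V. c * (sqrt (ip v v))\<^sup>2 \<le> inner (T v) v"
  shows "bij_betw T V V"
proof (rule self_adjoint_positive_definite_bij[OF assms(1-3)], intro ballI impI)
  fix v assume "v \<in> V" "v \<noteq> 0"
  then have "0 < ip v v"
    using assms(4) unfolding inner_product_on_def by blast
  then have "0 < c * (sqrt (ip v v))\<^sup>2"
    using assms(5) by simp
  also have "\<dots> \<le> inner (T v) v"
    using assms(6) \<open>v \<in> V\<close> by blast
  finally show "0 < inner (T v) v" .
qed

theorem lemmaD1: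
  fixes D D1 D2 :: "'a::{real_inner,complete_space} set"
    and A A1 A2 :: "'a \<Rightarrow> 'a"
    and I :: "real set"
    and V :: "real \<Rightarrow> 'a set"
    and P :: "real \<Rightarrow> 'a \<Rightarrow> 'a"
    and ipV :: "real \<Rightarrow> 'a \<Rightarrow> 'a \<Rightarrow> real"
    and Ah Ah1 Ah2 :: "real \<Rightarrow> 'a \<Rightarrow> 'a"
  assumes condA: "cond_A D A D1 A1 D2 A2"
    and I_pos: "I \<subseteq> {0<..}"
    \<comment> \<open>Condition (P)\<close>
    and Vh: "\<forall>h\<in>I. fin_dim_subspace (V h)"
    and Ph: "\<forall>h\<in>I. bounded_linear (P h) \<and> (\<forall>f. P h f \<in> V h) \<and> (\<forall>v\<in>V h. P h v = v)"
    and P_approx: "\<exists>C. \<forall>h\<in>I. \<forall>v\<in>D. norm (v - P h v) \<le> C * h\<^sup>2 * norm (A v)"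
    \<comment> \<open>Condition (Ah)\<close>
    and ipV: "\<forall>h\<in>I. inner_product_on (V h) (ipV h)"
    and normV: "\<exists>C. \<forall>h\<in>I. \<forall>v\<in>V h. norm v \<le> C * sqrt (ipV h v v)"
    and ops: "\<forall>h\<in>I. op_on (V h) (Ah h) \<and> op_on (V h) (Ah1 h) \<and> op_on (V h) (Ah2 h)"
    and Ah_a: "\<exists>C>0. \<forall>h\<in>I. \<forall>v\<in>V h. inner (Ah h v) v \<ge> C * (sqrt (ipV h v v))\<^sup>2"
    and Ah_b: "\<exists>C. \<forall>h\<in>I. \<forall>v\<in>V h. \<forall>w\<in>V h.
                 \<bar>inner (Ah h v) w\<bar> \<le> C * sqrt (ipV h v v) * sqrt (ipV h w w)"
    and Ah_c: "\<forall>h\<in>I. \<forall>v\<in>V h. Ah h v = Ah1 h v + Ah2 h v"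
    and Ah_d: "\<forall>h\<in>I. \<forall>v\<in>V h. inner (Ah1 h v) v \<ge> 0 \<and> inner (Ah2 h v) v \<ge> 0"
    and Ah_e: "\<exists>C. \<forall>h\<in>I. \<forall>f. norm (Ah1 h (P h f)) \<le> C / h\<^sup>2 * norm f
                            \<and> norm (Ah2 h (P h f)) \<le> C / h\<^sup>2 * norm f"
    and Ah_f: "\<exists>C. \<forall>h\<in>I. \<forall>v\<in>D. norm (P h (A1 v) - Ah1 h (P h v)) \<le> C * norm (A v)
                             \<and> norm (P h (A2 v) - Ah2 h (P h v)) \<le> C * norm (A v)"
    and Ah_g: "\<exists>C. \<forall>h\<in>I. \<forall>f.
                 norm (the_inv_into D A f - the_inv_into (V h) (Ah h) (P h f)) \<le> C * h\<^sup>2 * norm f"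
    \<comment> \<open>additional assumptions: A_{h,1}, A_{h,2} commute and are self-adjoint\<close>
    and commute: "\<forall>h\<in>I. \<forall>v\<in>V h. Ah1 h (Ah2 h v) = Ah2 h (Ah1 h v)"
    and selfadj: "\<forall>h\<in>I. \<forall>v\<in>V h. \<forall>w\<in>V h.
                    inner (Ah1 h v) w = inner v (Ah1 h w) \<and> inner (Ah2 h v) w = inner v (Ah2 h w)"
  shows "\<exists>C. \<forall>h\<in>I. \<forall>tf::real. \<forall>N::nat. \<forall>n\<in>{1..N}. \<forall>f. tf > 0 \<longrightarrow>
     (let \<tau> = tf / real N; t = real n * \<tau>;
          R1 = the_inv_into (V h) (\<lambda>v. v + \<tau> *\<^sub>R Ah1 h v);
          R2 = the_inv_into (V h) (\<lambda>v. v + \<tau> *\<^sub>R Ah2 h v);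
          S = (\<lambda>v. R2 (R1 (v + \<tau>\<^sup>2 *\<^sub>R Ah1 h (Ah2 h v))))
      in norm (exp_op t (Ah h) (P h f) - (S ^^ (n - 1)) (R2 (R1 (P h f))))
           \<le> C * (\<tau> / t) * norm f)"
proof -
  have self_adjoint: "\<forall>h\<in>I. \<forall>v\<in>V h. \<forall>w\<in>V h. inner (Ah h v) w = inner v (Ah h w)"
    using Ah_c selfadj by (simp add: inner_add_left inner_add_right)
  obtain c where "0 < c" and coercive: "\<forall>h\<in>I. \<forall>v\<in>V h. c * (sqrt (ipV h v v))\<^sup>2 \<le> inner (Ah h v) v"
    using Ah_a by blast
  have invertible: "\<forall>h\<in>I. bij_betw (Ah h) (V h) (V h)"
    using Vh ops self_adjoint ipV coercive
    by (intro ballI coercive_self_adjoint_bij[where ip = "ipV h" and c = c for h, OF _ _ _ _ \<open>0 < c\<close>]) auto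
  obtain Ce where Ce: "\<forall>h\<in>I. \<forall>f. norm (Ah1 h (P h f)) \<le> Ce / h\<^sup>2 * norm f
                                  \<and> norm (Ah2 h (P h f)) \<le> Ce / h\<^sup>2 * norm f"
    using Ah_e by blast
  have inverse_estimate: "\<exists>C. \<forall>h\<in>I. \<forall>f. norm (Ah h (P h f)) \<le> C / h\<^sup>2 * norm f"
  proof (intro exI ballI allI)
    fix h f assume "h \<in> I"
    have "norm (Ah h (P h f)) \<le> norm (Ah1 h (P h f)) + norm (Ah2 h (P h f))"
      using Ah_c Ph \<open>h \<in> I\<close> norm_triangle_ineq by metis
    also have "\<dots> \<le> Ce / h\<^sup>2 * norm f + Ce / h\<^sup>2 * norm f"
      using Ce \<open>h \<in> I\<close> by (intro add_mono) auto
    also have "\<dots> = (2 * Ce) / h\<^sup>2 * norm f"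
      by (simp only: mult_2 add_divide_distrib distrib_right)
    finally show "norm (Ah h (P h f)) \<le> (2 * Ce) / h\<^sup>2 * norm f" .
  qed
  have "\<forall>h\<in>I. linear (P h) \<and> (\<forall>f. P h f \<in> V h)"
    using Ph bounded_linear.linear by blast
  then obtain Cp where Cp: "\<forall>h\<in>I. \<forall>f. norm (P h f) \<le> Cp * norm f"
    using uniformly_bounded_projections[OF condA I_pos _ P_approx Ah_g inverse_estimate invertible self_adjoint]
    by blast
  show ?thesis
    unfolding Let_def
    apply (intro exI[of _ "300 * Cp"] ballI allI impI)
    subgoal premises prems for h tf N n f
    proof -
      have "0 < tf / real N" "1 \<le> n"
        using prems by auto
      have "300 / real n * norm (P h f) \<le> 300 * Cp * (tf / real N / (real n * (tf / real N))) * norm f"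
        using Cp prems \<open>0 < tf / real N\<close> by (simp add: divide_right_mono)
      moreover have "fin_dim_subspace (V h)" "op_on (V h) (Ah1 h)" "op_on (V h) (Ah2 h)"
        "\<forall>v\<in>V h. Ah h v = Ah1 h v + Ah2 h v" "\<forall>v\<in>V h. 0 \<le> inner (Ah1 h v) v \<and> 0 \<le> inner (Ah2 h v) v"
        "\<forall>v\<in>V h. \<forall>w\<in>V h. inner (Ah1 h v) w = inner v (Ah1 h w) \<and> inner (Ah2 h v) w = inner v (Ah2 h w)"
        "\<forall>v\<in>V h. Ah1 h (Ah2 h v) = Ah2 h (Ah1 h v)" "P h f \<in> V h"
        using prems(1) Vh ops Ah_c Ah_d selfadj commute Ph by simp_all
      ultimately show ?thesis
        using splitting_error_bound[OF _ _ _ _ _ _ _ \<open>0 < tf / real N\<close> \<open>1 \<le> n\<close>] by (blast intro: order_trans)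
    qed
    done
qed

end
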